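(* Let $g\in G$, $k\in K$ and $t\ge0$. Then \[ 0\le A^+(g^{-1}k\exp(tH))-H(g^{-1}k\exp(tH))\le\frac{1+|g.0|}{1-|g.0|}e^{-2t}. \]
   Context: $G=Sp(n,1)$ acting on the unit ball $\mathbb B(\mathbb H^n)=\{x\in\mathbb H^n:|x|<1\}$ by $x\mapsto(ax+b)(cx+d)^{-1}$ for $g=\begin{pmatrix}a&b\\c&d\end{pmatrix}$; $0$ is the origin and $|g.0|<1$. $K=Sp(n)\times Sp(1)$, $H=\begin{pmatrix}0_n&e_1\\{}^te_1&0\end{pmatrix}$, $A=\{\exp tH\}$. $H(x)$ is the Iwasawa projection, $x=\kappa(x)e^{H(x)}n(x)$ with $G=KAN$, and $A^+(x)\ge0$ the Cartan projection, $x=k_1e^{A^+(x)}k_2$, identified with real numbers. *)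

theory Defs
  imports Complex_Main
begin

datatype quat = Quat (qre: real) (qi: real) (qj: real) (qk: real)

instantiation quat :: ab_group_add
begin
definition "0 = Quat 0 0 0 0"
definition "p + q = Quat (qre p + qre q) (qi p + qi q) (qj p + qj q) (qk p + qk q)"
definition "- p = Quat (- qre p) (- qi p) (- qj p) (- qk p)"
definition "p - q = Quat (qre p - qre q) (qi p - qi q) (qj p - qj q) (qk p - qk q)"
instance
  by standard (auto simp: zero_quat_def plus_quat_def uminus_quat_def minus_quat_def
                 intro: quat.expand)
end

instantiation quat :: "{times, one, inverse}"
begin
definition "1 = Quat 1 0 0 0"
definition "p * q = Quat
   (qre p * qre q - qi p * qi q - qj p * qj q - qk p * qk q)
   (qre p * qi q + qi p * qre q + qj p * qk q - qk p * qj q)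
   (qre p * qj q - qi p * qk q + qj p * qre q + qk p * qi q)
   (qre p * qk q + qi p * qj q - qj p * qi q + qk p * qre q)"
definition "inverse p = (let s = (qre p)^2 + (qi p)^2 + (qj p)^2 + (qk p)^2 in
   Quat (qre p / s) (- qi p / s) (- qj p / s) (- qk p / s))"
definition "divide p q = p * inverse (q::quat)"
instance ..
end

definition qcnj :: "quat \<Rightarrow> quat" where
  "qcnj p = Quat (qre p) (- qi p) (- qj p) (- qk p)"

definition qnorm :: "quat \<Rightarrow> real" where
  "qnorm p = sqrt ((qre p)^2 + (qi p)^2 + (qj p)^2 + (qk p)^2)"

definition qreal :: "real \<Rightarrow> quat" where
  "qreal r = Quat r 0 0 0"

type_synonym qmat = "nat \<Rightarrow> nat \<Rightarrow> quat"

text \<open>Square matrix of size n+1 (indices 0..n; entries outside are zero).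
  Index i < n corresponds to the coordinates of H^n, index n to the last one.\<close>
definition is_mat :: "nat \<Rightarrow> qmat \<Rightarrow> bool" where
  "is_mat n M \<longleftrightarrow> (\<forall>i j. (n < i \<or> n < j) \<longrightarrow> M i j = 0)"

definition mmul :: "nat \<Rightarrow> qmat \<Rightarrow> qmat \<Rightarrow> qmat" where
  "mmul n A B = (\<lambda>i j. if i \<le> n \<and> j \<le> n then (\<Sum>k\<le>n. A i k * B k j) else 0)"

definition mid :: "nat \<Rightarrow> qmat" where
  "mid n = (\<lambda>i j. if i = j \<and> i \<le> n then 1 else 0)"

definition madj :: "nat \<Rightarrow> qmat \<Rightarrow> qmat" where
  "madj n A = (\<lambda>i j. if i \<le> n \<and> j \<le> n then qcnj (A j i) else 0)"

definition mdiff :: "qmat \<Rightarrow> qmat \<Rightarrow> qmat" where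
  "mdiff A B = (\<lambda>i j. A i j - B i j)"

definition mnorm :: "nat \<Rightarrow> qmat \<Rightarrow> real" where
  "mnorm n A = sqrt (\<Sum>i\<le>n. \<Sum>j\<le>n. (qnorm (A i j))^2)"

definition minv :: "nat \<Rightarrow> qmat \<Rightarrow> qmat" where
  "minv n A = (THE B. is_mat n B \<and> mmul n B A = mid n \<and> mmul n A B = mid n)"

definition Jform :: "nat \<Rightarrow> qmat" where
  "Jform n = (\<lambda>i j. if i = j \<and> i < n then 1 else if i = n \<and> j = n then - 1 else 0)"

definition Sp :: "nat \<Rightarrow> qmat set" where
  "Sp n = {g. is_mat n g \<and> mmul n (mmul n (madj n g) (Jform n)) g = Jform n}"

text \<open>K = Sp(n) x Sp(1): block diagonal elements of Sp(n,1).\<close>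
definition Kgrp :: "nat \<Rightarrow> qmat set" where
  "Kgrp n = {g \<in> Sp n. \<forall>i<n. g i n = 0 \<and> g n i = 0}"

text \<open>exp(tH) for H with entries H_{1,n+1} = H_{n+1,1} = 1 (here indices 0 and n),
  written out explicitly.\<close>
definition expH :: "nat \<Rightarrow> real \<Rightarrow> qmat" where
  "expH n t = (\<lambda>i j.
      if (i = 0 \<and> j = 0) \<or> (i = n \<and> j = n) then qreal (cosh t)
      else if (i = 0 \<and> j = n) \<or> (i = n \<and> j = 0) then qreal (sinh t)
      else if i = j \<and> i < n then 1 else 0)"

text \<open>N: the nilpotent subgroup of the Iwasawa decomposition G = KAN, namely the
  horospherical (contraction) subgroup {m | exp(-tH) m exp(tH) -> 1 as t -> +infinity},
  i.e. exp of the sum of the root spaces with positive roots on H.\<close>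
definition Ngrp :: "nat \<Rightarrow> qmat set" where
  "Ngrp n = {m \<in> Sp n.
     ((\<lambda>t. mnorm n (mdiff (mmul n (mmul n (expH n (- t)) m) (expH n t)) (mid n))) \<longlongrightarrow> 0) at_top}"

definition iwasawa :: "nat \<Rightarrow> qmat \<Rightarrow> real" where
  "iwasawa n x = (THE s. \<exists>\<kappa>\<in>Kgrp n. \<exists>m\<in>Ngrp n. x = mmul n (mmul n \<kappa> (expH n s)) m)"

definition cartan :: "nat \<Rightarrow> qmat \<Rightarrow> real" where
  "cartan n x = (THE t. 0 \<le> t \<and> (\<exists>k1\<in>Kgrp n. \<exists>k2\<in>Kgrp n. x = mmul n (mmul n k1 (expH n t)) k2))"

text \<open>Vectors of H^n: functions nat => quat, coordinates 0..n-1.\<close>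
definition vnorm :: "nat \<Rightarrow> (nat \<Rightarrow> quat) \<Rightarrow> real" where
  "vnorm n x = sqrt (\<Sum>i<n. (qnorm (x i))^2)"

definition act :: "nat \<Rightarrow> qmat \<Rightarrow> (nat \<Rightarrow> quat) \<Rightarrow> (nat \<Rightarrow> quat)" where
  "act n g x = (\<lambda>i. if i < n then
      ((\<Sum>j<n. g i j * x j) + g i n) * inverse ((\<Sum>j<n. g n j * x j) + g n n)
    else 0)"

end

(* Only the last row of x = g^-1 k exp(tH) matters. For x in Sp(n,1) one has
   cosh A+(x) = |x_nn|, since K fixes the last basis vector up to a unit, and
   exp H(x) = |x_n0 + x_nn|, since N fixes the isotropic vector e_0 + e_n, which exp(sH) scales
   by e^s. The last row of g^-1 k has entries b (column 0) and d (column n) with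
   |d| = D = |g_nn|, |b| <= B = (sum_l |g_ln|^2)^(1/2) and D^2 = 1 + B^2, so
   2 x_nn = (b + d) e^t + (d - b) e^-t and x_n0 + x_nn = (b + d) e^t. The triangle and
   Cauchy-Schwarz inequalities squeeze 2 cosh A+(x) between e^t P + e^-t / P and e^t P + e^-t Q,
   where P = |b + d| >= D - B and Q = |d - b| <= D + B. Hence
   0 <= A+(x) - H(x) <= log (1 + e^-2t Q / P) <= e^-2t (D + B) / (D - B), and |g.0| = B / D. *)

theory Submission
  imports Defs "Jordan_Normal_Form.Determinant" "HOL-Library.Function_Algebras"
begin

lemma sum_atMost_eq_lessThan_plus: "(\<Sum>k\<le>n. f k) = (\<Sum>k<n. f k) + f n" for n :: nat
  by (metis lessThan_Suc_atMost sum.lessThan_Suc)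

lemma sum_atMost_two_terms:
  fixes n :: nat
  assumes "0 < n" and "\<And>k. k \<le> n \<Longrightarrow> k \<noteq> 0 \<Longrightarrow> k \<noteq> n \<Longrightarrow> f k = 0"
  shows "(\<Sum>k\<le>n. f k) = f 0 + f n"
proof -
  have "(\<Sum>k\<le>n. f k) = (\<Sum>k\<in>{0, n}. f k)"
    using assms by (intro sum.mono_neutral_right) auto
  then show ?thesis
    using assms by simp
qed

lemma sum_rotate3: "(\<Sum>k\<in>A. \<Sum>m\<in>B. \<Sum>l\<in>C. F k l m) = (\<Sum>l\<in>C. \<Sum>m\<in>B. \<Sum>k\<in>A. F k l m)"
proof -
  have "(\<Sum>k\<in>A. \<Sum>m\<in>B. \<Sum>l\<in>C. F k l m) = (\<Sum>m\<in>B. \<Sum>k\<in>A. \<Sum>l\<in>C. F k l m)"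
    by (rule sum.swap)
  also have "\<dots> = (\<Sum>m\<in>B. \<Sum>l\<in>C. \<Sum>k\<in>A. F k l m)"
    by (rule sum.cong[OF refl], rule sum.swap)
  also have "\<dots> = (\<Sum>l\<in>C. \<Sum>m\<in>B. \<Sum>k\<in>A. F k l m)"
    by (rule sum.swap)
  finally show ?thesis .
qed

lemma sum_power2_norm_eq_0_iff:
  fixes f :: "'a \<Rightarrow> 'b::real_normed_vector"
  assumes "finite A"
  shows "(\<Sum>k\<in>A. (norm (f k))^2) = 0 \<longleftrightarrow> (\<forall>k\<in>A. f k = 0)"
  using assms by (simp add: sum_nonneg_eq_0_iff)

lemma sum_power2_le_power2_sum:
  fixes f :: "'a \<Rightarrow> real"
  assumes "finite A" "\<And>a. a \<in> A \<Longrightarrow> 0 \<le> f a"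
  shows "(\<Sum>a\<in>A. (f a)^2) \<le> (\<Sum>a\<in>A. f a)^2"
  using assms
proof (induction A rule: finite_induct)
  case (insert x F)
  then have "0 \<le> 2 * f x * sum f F"
    by (simp add: sum_nonneg)
  then show ?case
    using insert by (simp add: power2_sum)
qed simp

lemma sum_mult_le_sqrt_sum_power2:
  fixes a b :: "'a \<Rightarrow> real"
  assumes "finite A" and "(\<Sum>l\<in>A. (b l)^2) = 1"
  shows "(\<Sum>l\<in>A. a l * b l) \<le> sqrt (\<Sum>l\<in>A. (a l)^2)"
proof -
  define S where "S = sqrt (\<Sum>l\<in>A. (a l)^2)"
  have "0 \<le> (\<Sum>l\<in>A. (a l)^2)"
    by (simp add: sum_nonneg)
  then have S: "0 \<le> S" "S^2 = (\<Sum>l\<in>A. (a l)^2)"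
    by (simp_all add: S_def)
  show ?thesis
  proof (cases "S = 0")
    case True
    then show ?thesis
      using S assms(1) by (simp add: S_def sum_nonneg_eq_0_iff)
  next
    case False
    then have S_pos: "0 < S"
      using S by simp
    have "(\<Sum>l\<in>A. a l * b l) \<le> (\<Sum>l\<in>A. ((a l)^2 / S + S * (b l)^2) / 2)"
    proof (rule sum_mono)
      fix l
      have "2 * (a l * b l) * S \<le> (a l)^2 + S^2 * (b l)^2"
        using zero_le_power2[of "a l - S * b l"] by (simp add: power2_eq_square algebra_simps)
      then show "a l * b l \<le> ((a l)^2 / S + S * (b l)^2) / 2"
        using S_pos by (simp add: field_simps power2_eq_square)
    qed
    also have "\<dots> = ((\<Sum>l\<in>A. (a l)^2) / S + S * (\<Sum>l\<in>A. (b l)^2)) / 2"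
      by (simp add: sum_divide_distrib[symmetric] sum.distrib sum_distrib_left add_divide_distrib)
    also have "\<dots> = S"
      using S_pos by (simp add: assms(2) flip: S(2)) (simp add: power2_eq_square)
    finally show ?thesis
      by (simp add: S_def)
  qed
qed

lemma quat_eq_iff: "p = q \<longleftrightarrow> qre p = qre q \<and> qi p = qi q \<and> qj p = qj q \<and> qk p = qk q"
  by (cases p; cases q) auto

lemma quat_component_simps [simp]:
  "qre 0 = 0" "qi 0 = 0" "qj 0 = 0" "qk 0 = 0"
  "qre 1 = 1" "qi 1 = 0" "qj 1 = 0" "qk 1 = 0"
  "qre (p + q) = qre p + qre q" "qi (p + q) = qi p + qi q" "qj (p + q) = qj p + qj q" "qk (p + q) = qk p + qk q"
  "qre (p - q) = qre p - qre q" "qi (p - q) = qi p - qi q" "qj (p - q) = qj p - qj q" "qk (p - q) = qk p - qk q"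
  "qre (- p) = - qre p" "qi (- p) = - qi p" "qj (- p) = - qj p" "qk (- p) = - qk p"
  "qre (p * q) = qre p * qre q - qi p * qi q - qj p * qj q - qk p * qk q"
  "qi (p * q) = qre p * qi q + qi p * qre q + qj p * qk q - qk p * qj q"
  "qj (p * q) = qre p * qj q - qi p * qk q + qj p * qre q + qk p * qi q"
  "qk (p * q) = qre p * qk q + qi p * qj q - qj p * qi q + qk p * qre q"
  "qre (qcnj p) = qre p" "qi (qcnj p) = - qi p" "qj (qcnj p) = - qj p" "qk (qcnj p) = - qk p"
  "qre (qreal r) = r" "qi (qreal r) = 0" "qj (qreal r) = 0" "qk (qreal r) = 0"
  by (simp_all add: zero_quat_def one_quat_def plus_quat_def minus_quat_def uminus_quat_def
      times_quat_def qcnj_def qreal_def)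

lemma quat_inverse_components [simp]:
  "qre (inverse p) = qre p / (qre p ^ 2 + qi p ^ 2 + qj p ^ 2 + qk p ^ 2)"
  "qi (inverse p) = - qi p / (qre p ^ 2 + qi p ^ 2 + qj p ^ 2 + qk p ^ 2)"
  "qj (inverse p) = - qj p / (qre p ^ 2 + qi p ^ 2 + qj p ^ 2 + qk p ^ 2)"
  "qk (inverse p) = - qk p / (qre p ^ 2 + qi p ^ 2 + qj p ^ 2 + qk p ^ 2)"
  by (simp_all add: inverse_quat_def Let_def)

lemma quat_sum_squares_eq_0_iff: "qre p ^ 2 + qi p ^ 2 + qj p ^ 2 + qk p ^ 2 = 0 \<longleftrightarrow> p = 0"
  by (simp add: quat_eq_iff add_nonneg_eq_0_iff)

instance quat :: division_ring
proof
  fix a b :: quat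
  show "a / b = a * inverse b" by (simp add: divide_quat_def)
  assume "a \<noteq> 0"
  then have "qre a ^ 2 + qi a ^ 2 + qj a ^ 2 + qk a ^ 2 \<noteq> 0"
    by (simp add: quat_sum_squares_eq_0_iff)
  then show "inverse a * a = 1" "a * inverse a = 1"
    by (simp_all add: quat_eq_iff divide_simps) (simp_all add: algebra_simps power2_eq_square)
qed (simp_all add: quat_eq_iff algebra_simps)

instantiation quat :: real_algebra_1
begin
definition scaleR_quat :: "real \<Rightarrow> quat \<Rightarrow> quat" where
  "scaleR_quat r x = Quat (r * qre x) (r * qi x) (r * qj x) (r * qk x)"
instance
  by standard (simp_all add: quat_eq_iff scaleR_quat_def algebra_simps)
end

lemma quat_scaleR_components [simp]:
  "qre (scaleR r p) = r * qre p" "qi (scaleR r p) = r * qi p"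
  "qj (scaleR r p) = r * qj p" "qk (scaleR r p) = r * qk p"
  by (simp_all add: scaleR_quat_def)

lemma quat_of_real_components [simp]:
  "qre (of_real r) = r" "qi (of_real r) = 0" "qj (of_real r) = 0" "qk (of_real r) = 0"
  by (simp_all add: of_real_def)

lemma cauchy_schwarz_real4:
  fixes a b c d e f g h :: real
  shows "(a*e + b*f + c*g + d*h)^2 \<le> (a^2 + b^2 + c^2 + d^2) * (e^2 + f^2 + g^2 + h^2)"
proof -
  have "(a^2 + b^2 + c^2 + d^2) * (e^2 + f^2 + g^2 + h^2) - (a*e + b*f + c*g + d*h)^2 =
    (a*f - b*e)^2 + (a*g - c*e)^2 + (a*h - d*e)^2 + (b*g - c*f)^2 + (b*h - d*f)^2 + (c*h - d*g)^2"
    by (simp add: power2_eq_square algebra_simps)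
  then show ?thesis
    by (smt (verit) zero_le_power2)
qed

lemma sqrt_sum4_triangle:
  fixes a b c d e f g h :: real
  shows "sqrt ((a+e)^2 + (b+f)^2 + (c+g)^2 + (d+h)^2)
    \<le> sqrt (a^2 + b^2 + c^2 + d^2) + sqrt (e^2 + f^2 + g^2 + h^2)"
proof -
  let ?x = "sqrt (a^2 + b^2 + c^2 + d^2)" and ?y = "sqrt (e^2 + f^2 + g^2 + h^2)"
  have "(a*e + b*f + c*g + d*h)^2 \<le> (?x * ?y)^2"
    using cauchy_schwarz_real4[of a e b f c g d h] by (simp add: power_mult_distrib)
  then have "a*e + b*f + c*g + d*h \<le> ?x * ?y"
    using abs_le_square_iff by force
  then have "(a+e)^2 + (b+f)^2 + (c+g)^2 + (d+h)^2 \<le> (?x + ?y)^2"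
    by (simp add: power2_sum algebra_simps)
  then show ?thesis
    using real_sqrt_le_mono by fastforce
qed

instantiation quat :: real_normed_div_algebra
begin
definition norm_quat :: "quat \<Rightarrow> real" where "norm_quat = qnorm"
definition sgn_quat_def: "sgn x = x /\<^sub>R norm (x::quat)"
definition dist_quat_def: "dist x y = norm ((x::quat) - y)"
definition uniformity_quat_def:
  "(uniformity :: (quat \<times> quat) filter) = (INF e\<in>{0 <..}. principal {(x, y). dist x y < e})"
definition open_quat_def:
  "open (U :: quat set) \<longleftrightarrow> (\<forall>x\<in>U. eventually (\<lambda>(x', y). x' = x \<longrightarrow> y \<in> U) uniformity)"
instance
proof
  fix r :: real and x y :: quat
  show "(norm x = 0) = (x = 0)"
    by (simp add: norm_quat_def qnorm_def quat_sum_squares_eq_0_iff)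
  show "norm (x + y) \<le> norm x + norm y"
    using sqrt_sum4_triangle by (simp add: norm_quat_def qnorm_def)
  show "norm (scaleR r x) = \<bar>r\<bar> * norm x"
    by (simp add: norm_quat_def qnorm_def power_mult_distrib real_sqrt_mult flip: distrib_left)
  show "norm (x * y) = norm x * norm y"
    by (simp add: norm_quat_def qnorm_def power2_eq_square algebra_simps flip: real_sqrt_mult)
qed (rule sgn_quat_def dist_quat_def open_quat_def uniformity_quat_def)+
end

lemma norm_quat_squared: "(norm p)^2 = qre p ^ 2 + qi p ^ 2 + qj p ^ 2 + qk p ^ 2"
  by (simp add: norm_quat_def qnorm_def)

lemma quat_numeral_components [simp]:
  "qre (numeral w) = numeral w" "qi (numeral w) = 0" "qj (numeral w) = 0" "qk (numeral w) = 0"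
  using quat_of_real_components[of "numeral w"] by (simp_all only: of_real_numeral)

lemma norm_quat_divide: "norm (a / b) = norm a / norm (b :: quat)"
  by (simp add: divide_inverse norm_mult norm_inverse)

lemma qnorm_eq_norm: "qnorm p = norm p"
  by (simp add: norm_quat_def)

lemma qreal_eq_of_real: "qreal r = of_real r"
  by (simp add: quat_eq_iff)

lemma of_real_quat_commute: "of_real r * p = p * (of_real r :: quat)"
  by (simp add: quat_eq_iff algebra_simps)

lemma qcnj_mult: "qcnj (p * q) = qcnj q * qcnj p"
  by (simp add: quat_eq_iff algebra_simps)

lemma qcnj_add: "qcnj (p + q) = qcnj p + qcnj q"
  and qcnj_diff: "qcnj (p - q) = qcnj p - qcnj q"
  and qcnj_minus: "qcnj (- p) = - qcnj p"
  and qcnj_qcnj [simp]: "qcnj (qcnj p) = p"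
  and qcnj_of_real [simp]: "qcnj (of_real r) = of_real r"
  and qcnj_0 [simp]: "qcnj 0 = 0"
  and qcnj_1 [simp]: "qcnj 1 = 1"
  and norm_qcnj [simp]: "norm (qcnj p) = norm p"
  and qcnj_numeral [simp]: "qcnj (numeral w) = numeral w"
  by (simp_all add: quat_eq_iff norm_quat_def qnorm_def)

lemma qcnj_sum: "qcnj (sum f A) = (\<Sum>a\<in>A. qcnj (f a))"
  by (induction A rule: infinite_finite_induct) (auto simp: qcnj_add)

lemma qcnj_mult_self: "qcnj p * p = of_real ((norm p)^2)"
  by (simp add: quat_eq_iff norm_quat_def qnorm_def power2_eq_square algebra_simps)

lemma quat_polar_decomposition:
  fixes a :: quat
  obtains l where "norm l = 1" "a = l * of_real (norm a)"
proof (cases "a = 0")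
  case True
  then show ?thesis
    by (intro that[of 1]) simp_all
next
  case False
  then show ?thesis
    by (intro that[of "a * of_real (1 / norm a)"])
      (simp_all add: norm_mult norm_inverse divide_inverse mult.assoc)
qed

section \<open>Quaternionic matrices\<close>

lemma mmul_assoc: "mmul n (mmul n A B) C = mmul n A (mmul n B C)"
proof (rule ext, rule ext)
  fix i j
  show "mmul n (mmul n A B) C i j = mmul n A (mmul n B C) i j"
  proof (cases "i \<le> n \<and> j \<le> n")
    case True
    have "mmul n (mmul n A B) C i j = (\<Sum>k\<le>n. (\<Sum>l\<le>n. A i l * B l k) * C k j)"
      using True by (simp add: mmul_def)
    also have "\<dots> = (\<Sum>k\<le>n. \<Sum>l\<le>n. A i l * B l k * C k j)"
      by (simp add: sum_distrib_right)
    also have "\<dots> = (\<Sum>l\<le>n. \<Sum>k\<le>n. A i l * (B l k * C k j))"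
      by (subst sum.swap) (simp add: mult.assoc)
    also have "\<dots> = (\<Sum>l\<le>n. A i l * (\<Sum>k\<le>n. B l k * C k j))"
      by (simp add: sum_distrib_left)
    also have "\<dots> = mmul n A (mmul n B C) i j"
      using True by (simp add: mmul_def)
    finally show ?thesis .
  qed (auto simp: mmul_def)
qed

lemma is_mat_mmul [simp]: "is_mat n (mmul n A B)"
  and is_mat_mid [simp]: "is_mat n (mid n)"
  and is_mat_madj [simp]: "is_mat n (madj n A)"
  and is_mat_Jform [simp]: "is_mat n (Jform n)"
  by (auto simp: is_mat_def mmul_def mid_def madj_def Jform_def)

lemma mmul_mid_left: "is_mat n A \<Longrightarrow> mmul n (mid n) A = A"
  by (auto simp: mmul_def mid_def is_mat_def if_distrib[of "\<lambda>x. x * _"] cong: if_cong intro!: ext)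

lemma mmul_mid_right: "is_mat n A \<Longrightarrow> mmul n A (mid n) = A"
  by (auto simp: mmul_def mid_def is_mat_def if_distrib[of "\<lambda>x. _ * x"] cong: if_cong intro!: ext)

lemma madj_mmul: "madj n (mmul n A B) = mmul n (madj n B) (madj n A)"
  by (auto simp: madj_def mmul_def qcnj_sum qcnj_mult intro!: ext)

lemma madj_madj: "is_mat n A \<Longrightarrow> madj n (madj n A) = A"
  by (auto simp: madj_def is_mat_def intro!: ext)

definition jdiag :: "nat \<Rightarrow> nat \<Rightarrow> quat" where
  "jdiag n i = (if i < n then 1 else -1)"

lemma Jform_eq_jdiag: "Jform n i j = (if i = j \<and> i \<le> n then jdiag n i else 0)"
  by (auto simp: Jform_def jdiag_def)

lemma madj_Jform [simp]: "madj n (Jform n) = Jform n"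
  by (auto simp: madj_def Jform_def quat_eq_iff intro!: ext)

lemma mmul_Jform_right:
  "mmul n A (Jform n) = (\<lambda>i j. if i \<le> n \<and> j \<le> n then A i j * jdiag n j else 0)"
  by (auto simp: mmul_def Jform_eq_jdiag if_distrib[of "\<lambda>x. _ * x"] cong: if_cong intro!: ext)

lemma mmul_Jform_left:
  "mmul n (Jform n) A = (\<lambda>i j. if i \<le> n \<and> j \<le> n then jdiag n i * A i j else 0)"
  by (auto simp: mmul_def Jform_eq_jdiag if_distrib[of "\<lambda>x. x * _"] cong: if_cong intro!: ext)

lemma jdiag_sq [simp]: "jdiag n i * jdiag n i = 1"
  by (simp add: jdiag_def)

lemma jdiag_of_real: "jdiag n k = of_real (if k < n then 1 else -1)"
  by (simp add: jdiag_def)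

lemma jdiag_commute: "jdiag n k * p = p * jdiag n k"
  by (simp add: jdiag_of_real of_real_quat_commute)

lemma qcnj_jdiag [simp]: "qcnj (jdiag n k) = jdiag n k"
  by (simp add: jdiag_of_real)

lemma Jform_mmul_Jform: "mmul n (Jform n) (Jform n) = mid n"
  by (auto simp: mmul_Jform_left Jform_eq_jdiag mid_def intro!: ext)

(* Replacing each entry by the real 4x4 matrix of left multiplication turns mmul_right_inverse
   into a statement about real matrices of size 4(n+1), where Jordan_Normal_Form proves it via
   determinants. *)

definition qcoord :: "nat \<Rightarrow> quat \<Rightarrow> real" where
  "qcoord r q = (if r = 0 then qre q else if r = 1 then qi q else if r = 2 then qj q else qk q)"

definition qbasis :: "nat \<Rightarrow> quat" where
  "qbasis s = Quat (if s = 0 then 1 else 0) (if s = 1 then 1 else 0)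
                   (if s = 2 then 1 else 0) (if s = 3 then 1 else 0)"

lemma qcoord_add: "qcoord r (a + b) = qcoord r a + qcoord r b"
  by (simp add: qcoord_def)

lemma qcoord_sum: "qcoord r (sum f A) = (\<Sum>x\<in>A. qcoord r (f x))"
  by (induction A rule: infinite_finite_induct) (auto simp: qcoord_add qcoord_def)

lemma qcoord_mult_expand: "(\<Sum>s<4. qcoord r (a * qbasis s) * qcoord s y) = qcoord r (a * y)"
  by (simp add: numeral_eq_Suc qcoord_def qbasis_def algebra_simps)

lemma quat_eqI_qcoord:
  assumes "\<And>r. r < 4 \<Longrightarrow> qcoord r a = qcoord r b"
  shows "a = b"
  using assms[of 0] assms[of 1] assms[of 2] assms[of 3] by (simp add: qcoord_def quat_eq_iff)

definition real_rep :: "nat \<Rightarrow> qmat \<Rightarrow> real mat" where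
  "real_rep n M = mat (4 * Suc n) (4 * Suc n)
     (\<lambda>(i, j). qcoord (i mod 4) (M (i div 4) (j div 4) * qbasis (j mod 4)))"

lemma real_rep_carrier: "real_rep n M \<in> carrier_mat (4 * Suc n) (4 * Suc n)"
  by (simp add: real_rep_def)

lemma sum_lessThan_blocks4: "(\<Sum>k<4 * Suc n. f k) = (\<Sum>K\<le>n. \<Sum>s<4. f (K * 4 + s))"
proof -
  have "(\<Sum>k<4 * Suc n. f k) = (\<Sum>K<Suc n. sum f {K * 4..<K * 4 + 4})"
    using sum.nat_group[where g=f and k=4 and n="Suc n"] by (simp add: mult.commute)
  also have "\<dots> = (\<Sum>K\<le>n. \<Sum>s<4. f (K * 4 + s))"
  proof (rule sum.cong)
    fix K
    show "sum f {K * 4..<K * 4 + 4} = (\<Sum>s<4. f (K * 4 + s))"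
      using sum.shift_bounds_nat_ivl[where g=f and m=0 and k="K*4" and n=4] by (simp add: atLeast0LessThan add.commute)
  qed (auto simp: lessThan_Suc_atMost)
  finally show ?thesis .
qed

lemma real_rep_mmul: "real_rep n (mmul n A B) = real_rep n A * real_rep n B"
proof (rule eq_matI)
  fix i j assume i: "i < dim_row (real_rep n A * real_rep n B)" and j: "j < dim_col (real_rep n A * real_rep n B)"
  then have i': "i < 4 * Suc n" and j': "j < 4 * Suc n" by (simp_all add: real_rep_def)
  then have I: "i div 4 \<le> n" and Jn: "j div 4 \<le> n" by auto
  have "(real_rep n A * real_rep n B) $$ (i, j) = (\<Sum>k<4 * Suc n. real_rep n A $$ (i, k) * real_rep n B $$ (k, j))"
    using i' j' by (simp add: real_rep_def scalar_prod_def atLeast0LessThan)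
  also have "\<dots> = (\<Sum>k<4 * Suc n. qcoord (i mod 4) (A (i div 4) (k div 4) * qbasis (k mod 4)) *
        qcoord (k mod 4) (B (k div 4) (j div 4) * qbasis (j mod 4)))"
    using i' j' by (intro sum.cong) (simp_all add: real_rep_def)
  also have "\<dots> = (\<Sum>K\<le>n. \<Sum>s<4. qcoord (i mod 4) (A (i div 4) K * qbasis s) *
        qcoord s (B K (j div 4) * qbasis (j mod 4)))"
    by (subst sum_lessThan_blocks4) simp
  also have "\<dots> = (\<Sum>K\<le>n. qcoord (i mod 4) (A (i div 4) K * (B K (j div 4) * qbasis (j mod 4))))"
    by (simp add: qcoord_mult_expand)
  also have "\<dots> = qcoord (i mod 4) ((\<Sum>K\<le>n. A (i div 4) K * B K (j div 4)) * qbasis (j mod 4))"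
    by (simp add: qcoord_sum sum_distrib_right mult.assoc)
  also have "\<dots> = real_rep n (mmul n A B) $$ (i, j)"
    using i' j' I Jn by (simp add: real_rep_def mmul_def)
  finally show "real_rep n (mmul n A B) $$ (i, j) = (real_rep n A * real_rep n B) $$ (i, j)" by simp
qed (simp_all add: real_rep_def)

lemma real_rep_mid: "real_rep n (mid n) = 1\<^sub>m (4 * Suc n)"
proof (rule eq_matI)
  fix i j assume "i < dim_row (1\<^sub>m (4 * Suc n) :: real mat)" "j < dim_col (1\<^sub>m (4 * Suc n) :: real mat)"
  then have i': "i < 4 * Suc n" and j': "j < 4 * Suc n" by simp_all
  have "i = j \<longleftrightarrow> i div 4 = j div 4 \<and> i mod 4 = j mod 4"
    by (metis div_mult_mod_eq)
  moreover have "j mod 4 < 4" by simp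
  then have "qcoord (i mod 4) (qbasis (j mod 4)) = (if i mod 4 = j mod 4 then 1 else 0)"
    by (auto simp: qcoord_def qbasis_def)
  moreover have "real_rep n (mid n) $$ (i, j) = (if i div 4 = j div 4 then qcoord (i mod 4) (qbasis (j mod 4)) else 0)"
  proof -
    have "j div 4 \<le> n" using j' by auto
    then show ?thesis using i' j' by (simp add: real_rep_def mid_def) (simp add: qcoord_def)
  qed
  moreover have "1\<^sub>m (4 * Suc n) $$ (i, j) = (if i = j then 1 else (0::real))"
    using i' j' by simp
  ultimately show "real_rep n (mid n) $$ (i, j) = 1\<^sub>m (4 * Suc n) $$ (i, j)"
    by (simp only:) auto
qed (simp_all add: real_rep_def)

lemma real_rep_inj:
  assumes "real_rep n A = real_rep n B" "i \<le> n" "j \<le> n"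
  shows "A i j = B i j"
proof (rule quat_eqI_qcoord)
  fix r :: nat assume r: "r < 4"
  have "real_rep n A $$ (4 * i + r, 4 * j) = real_rep n B $$ (4 * i + r, 4 * j)" using assms by simp
  moreover have "4 * i + r < 4 * Suc n" "4 * j < 4 * Suc n" using assms r by auto
  ultimately show "qcoord r (A i j) = qcoord r (B i j)"
    using r by (simp add: real_rep_def qbasis_def quat_eq_iff[symmetric] one_quat_def[symmetric])
qed

lemma mmul_right_inverse:
  assumes A: "is_mat n A" and B: "is_mat n B" and BA: "mmul n B A = mid n"
  shows "mmul n A B = mid n"
proof -
  have "real_rep n B * real_rep n A = 1\<^sub>m (4 * Suc n)" using BA by (simp add: real_rep_mmul[symmetric] real_rep_mid)
  then have "real_rep n A * real_rep n B = 1\<^sub>m (4 * Suc n)"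
    using mat_mult_left_right_inverse[OF real_rep_carrier real_rep_carrier] by blast
  then have e: "real_rep n (mmul n A B) = real_rep n (mid n)" by (simp add: real_rep_mmul real_rep_mid)
  show ?thesis
  proof (rule ext, rule ext)
    fix i j show "mmul n A B i j = mid n i j"
    proof (cases "i \<le> n \<and> j \<le> n")
      case True then show ?thesis using real_rep_inj[OF e] by blast
    qed (auto simp: mmul_def mid_def)
  qed
qed

definition spinv :: "nat \<Rightarrow> qmat \<Rightarrow> qmat" where
  "spinv n g = mmul n (Jform n) (mmul n (madj n g) (Jform n))"

lemma Sp_is_mat: "g \<in> Sp n \<Longrightarrow> is_mat n g" by (simp add: Sp_def)
lemma Sp_eq: "g \<in> Sp n \<Longrightarrow> mmul n (madj n g) (mmul n (Jform n) g) = Jform n"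
  by (simp add: Sp_def mmul_assoc)

lemma Jform_mmul_Jform_left: "is_mat n X \<Longrightarrow> mmul n (Jform n) (mmul n (Jform n) X) = X"
  by (simp add: mmul_assoc[symmetric] Jform_mmul_Jform mmul_mid_left)

lemma Sp_eq_assoc: "g \<in> Sp n \<Longrightarrow> mmul n (madj n g) (mmul n (Jform n) (mmul n g X)) = mmul n (Jform n) X"
  by (simp add: mmul_assoc[symmetric]) (simp add: mmul_assoc Sp_eq)

lemma spinv_left: "g \<in> Sp n \<Longrightarrow> mmul n (spinv n g) g = mid n"
  by (simp add: spinv_def mmul_assoc Sp_eq Jform_mmul_Jform)

lemma is_mat_spinv [simp]: "is_mat n (spinv n g)" by (simp add: spinv_def)

lemma spinv_right: "g \<in> Sp n \<Longrightarrow> mmul n g (spinv n g) = mid n"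
  by (rule mmul_right_inverse) (simp_all add: Sp_is_mat spinv_left)

lemma minv_eq_spinv:
  assumes g: "g \<in> Sp n"
  shows "minv n g = spinv n g"
  unfolding minv_def
proof (rule the_equality)
  show "is_mat n (spinv n g) \<and> mmul n (spinv n g) g = mid n \<and> mmul n g (spinv n g) = mid n"
    using g by (simp add: spinv_left spinv_right)
next
  fix B assume B: "is_mat n B \<and> mmul n B g = mid n \<and> mmul n g B = mid n"
  have "B = mmul n B (mmul n g (spinv n g))" using B g by (simp add: spinv_right mmul_mid_right)
  also have "\<dots> = spinv n g" using B by (simp add: mmul_assoc[symmetric] mmul_mid_left)
  finally show "B = spinv n g" .
qed

lemma Sp_eq_madj:
  assumes g: "g \<in> Sp n"
  shows "mmul n g (mmul n (Jform n) (madj n g)) = Jform n"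
proof -
  have "mmul n g (mmul n (Jform n) (mmul n (madj n g) (Jform n))) = mid n"
    using spinv_right[OF g] by (simp add: spinv_def)
  then have "mmul n (mmul n g (mmul n (Jform n) (madj n g))) (Jform n) = mid n"
    by (simp add: mmul_assoc)
  then have "mmul n (mmul n (mmul n g (mmul n (Jform n) (madj n g))) (Jform n)) (Jform n) = Jform n"
    by (simp add: mmul_mid_left)
  then show ?thesis by (simp add: mmul_assoc Jform_mmul_Jform mmul_mid_right)
qed

lemma madj_Sp:
  assumes g: "g \<in> Sp n"
  shows "madj n g \<in> Sp n"
  using Sp_eq_madj[OF g] by (simp add: Sp_def madj_madj[OF Sp_is_mat[OF g]] mmul_assoc)

lemma Sp_mmul:
  assumes "A \<in> Sp n" "B \<in> Sp n"
  shows "mmul n A B \<in> Sp n"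
  using assms by (simp add: Sp_def madj_mmul mmul_assoc Sp_eq_assoc)

lemma Sp_eq_madj_assoc: "g \<in> Sp n \<Longrightarrow> mmul n g (mmul n (Jform n) (mmul n (madj n g) X)) = mmul n (Jform n) X"
  by (simp add: mmul_assoc[symmetric]) (simp add: mmul_assoc Sp_eq_madj)

lemma spinv_Sp:
  assumes g: "g \<in> Sp n"
  shows "spinv n g \<in> Sp n"
proof -
  have m: "is_mat n g" using g by (rule Sp_is_mat)
  have "madj n (spinv n g) = mmul n (Jform n) (mmul n g (Jform n))"
    by (simp add: spinv_def madj_mmul madj_madj[OF m] mmul_assoc)
  then show ?thesis
    using g m by (simp add: Sp_def spinv_def mmul_assoc Jform_mmul_Jform_left Sp_eq_madj_assoc)
qed

definition mvec :: "nat \<Rightarrow> qmat \<Rightarrow> (nat \<Rightarrow> quat) \<Rightarrow> (nat \<Rightarrow> quat)" where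
  "mvec n M z = (\<lambda>i. if i \<le> n then (\<Sum>k\<le>n. M i k * z k) else 0)"

definition is_vec :: "nat \<Rightarrow> (nat \<Rightarrow> quat) \<Rightarrow> bool" where
  "is_vec n z \<longleftrightarrow> (\<forall>i. n < i \<longrightarrow> z i = 0)"

definition evec :: "nat \<Rightarrow> nat \<Rightarrow> quat" where
  "evec j = (\<lambda>i. if i = j then 1 else 0)"

lemma evec_apply: "evec j i = (if i = j then 1 else 0)"
  by (simp add: evec_def)

definition mcol :: "qmat \<Rightarrow> nat \<Rightarrow> nat \<Rightarrow> quat" where
  "mcol M j = (\<lambda>i. M i j)"

definition vscale :: "(nat \<Rightarrow> quat) \<Rightarrow> quat \<Rightarrow> nat \<Rightarrow> quat" where
  "vscale z q = (\<lambda>i. z i * q)"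

lemma vscale_apply: "vscale z q i = z i * q"
  by (simp add: vscale_def)

lemma mvec_mmul: "mvec n (mmul n A B) z = mvec n A (mvec n B z)"
proof (rule ext)
  fix i show "mvec n (mmul n A B) z i = mvec n A (mvec n B z) i"
  proof (cases "i \<le> n")
    case True
    have "mvec n (mmul n A B) z i = (\<Sum>k\<le>n. \<Sum>l\<le>n. A i l * B l k * z k)"
      using True by (simp add: mvec_def mmul_def sum_distrib_right)
    also have "\<dots> = (\<Sum>l\<le>n. A i l * (\<Sum>k\<le>n. B l k * z k))"
      by (subst sum.swap) (simp add: sum_distrib_left mult.assoc)
    also have "\<dots> = mvec n A (mvec n B z) i"
      using True by (simp add: mvec_def)
    finally show ?thesis .
  qed (simp add: mvec_def)
qed

lemma is_vec_mvec [simp]: "is_vec n (mvec n M z)"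
  by (simp add: is_vec_def mvec_def)

lemma mvec_mid: "is_vec n z \<Longrightarrow> mvec n (mid n) z = z"
  by (auto simp: mvec_def mid_def is_vec_def if_distrib[of "\<lambda>x. x * _"] cong: if_cong intro!: ext)

lemma mvec_evec: "j \<le> n \<Longrightarrow> is_mat n M \<Longrightarrow> mvec n M (evec j) = mcol M j"
  by (auto simp: mvec_def evec_def mcol_def is_mat_def if_distrib[of "\<lambda>x. _ * x"] cong: if_cong
      intro!: ext)

lemma mvec_add: "mvec n M (a + b) = mvec n M a + mvec n M b"
  by (auto simp: mvec_def distrib_left sum.distrib intro!: ext)

lemma mvec_diff: "mvec n M (a - b) = mvec n M a - mvec n M b"
  by (auto simp: mvec_def right_diff_distrib sum_subtractf intro!: ext)

lemma mvec_vscale: "mvec n M (vscale a q) = vscale (mvec n M a) q"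
  by (auto simp: mvec_def vscale_def sum_distrib_right mult.assoc intro!: ext)

definition hform :: "nat \<Rightarrow> (nat \<Rightarrow> quat) \<Rightarrow> (nat \<Rightarrow> quat) \<Rightarrow> quat" where
  "hform n a b = (\<Sum>k\<le>n. qcnj (a k) * jdiag n k * b k)"

lemma hform_add_right: "hform n a (b + c) = hform n a b + hform n a c"
  by (simp add: hform_def distrib_left sum.distrib)

lemma hform_diff_right: "hform n a (b - c) = hform n a b - hform n a c"
  by (simp add: hform_def right_diff_distrib sum_subtractf)

lemma hform_diff_left: "hform n (a - b) c = hform n a c - hform n b c"
  by (simp add: hform_def left_diff_distrib qcnj_diff sum_subtractf)

lemma hform_vscale_right: "hform n a (vscale b q) = hform n a b * q"
  by (simp add: hform_def vscale_def sum_distrib_right mult.assoc)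

lemma hform_vscale_left: "hform n (vscale a q) b = qcnj q * hform n a b"
proof -
  have "hform n (vscale a q) b = (\<Sum>k\<le>n. qcnj q * (qcnj (a k) * jdiag n k * b k))"
    unfolding hform_def vscale_def qcnj_mult
    by (rule sum.cong) (simp_all add: mult.assoc jdiag_commute)
  then show ?thesis
    by (simp add: hform_def sum_distrib_left)
qed

lemma qcnj_hform: "qcnj (hform n a b) = hform n b a"
  unfolding hform_def qcnj_sum
  by (rule sum.cong) (simp_all add: qcnj_mult mult.assoc jdiag_commute)

lemma hform_self: "hform n a a = of_real ((\<Sum>k<n. (norm (a k))^2) - (norm (a n))^2)"
proof -
  have "hform n a a = (\<Sum>k\<le>n. jdiag n k * (qcnj (a k) * a k))"
    unfolding hform_def by (intro sum.cong) (simp_all add: mult.assoc jdiag_commute)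
  also have "\<dots> = (\<Sum>k<n. of_real ((norm (a k))^2)) - of_real ((norm (a n))^2)"
    by (simp add: sum_atMost_eq_lessThan_plus qcnj_mult_self jdiag_def)
  finally show ?thesis by simp
qed

lemma hform_evec_left: "i \<le> n \<Longrightarrow> hform n (evec i) z = jdiag n i * z i"
  by (simp add: hform_def evec_def if_distrib[of "\<lambda>x. x * _"] if_distrib[of "qcnj"] cong: if_cong)

lemma hform_evec_right: "j \<le> n \<Longrightarrow> hform n z (evec j) = qcnj (z j) * jdiag n j"
  by (simp add: hform_def evec_def if_distrib[of "\<lambda>x. _ * x"] cong: if_cong)

lemma hform_columns:
  "i \<le> n \<Longrightarrow> j \<le> n \<Longrightarrow> mmul n (madj n g) (mmul n (Jform n) g) i j = hform n (mcol g i) (mcol g j)"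
  unfolding mmul_Jform_left by (simp add: mmul_def madj_def hform_def mcol_def mult.assoc)

lemma Sp_of_hform_columns:
  assumes "is_mat n g"
    and "\<And>i j. i \<le> n \<Longrightarrow> j \<le> n \<Longrightarrow> hform n (mcol g i) (mcol g j) = Jform n i j"
  shows "g \<in> Sp n"
proof -
  have "mmul n (madj n g) (mmul n (Jform n) g) i j = Jform n i j" for i j
  proof (cases "i \<le> n \<and> j \<le> n")
    case True
    then show ?thesis
      using assms(2) by (simp add: hform_columns)
  qed (auto simp: mmul_def Jform_def)
  then show ?thesis
    using assms by (simp add: Sp_def mmul_assoc fun_eq_iff)
qed

lemma Sp_of_hform_columns_le:
  assumes g: "is_mat n g"
    and cols: "\<And>i j. i \<le> j \<Longrightarrow> j \<le> n \<Longrightarrow> hform n (mcol g i) (mcol g j) = Jform n i j"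
  shows "g \<in> Sp n"
proof (rule Sp_of_hform_columns[OF g])
  fix i j assume "i \<le> n" "j \<le> n"
  show "hform n (mcol g i) (mcol g j) = Jform n i j"
  proof (cases "i \<le> j")
    case False
    then have "qcnj (hform n (mcol g j) (mcol g i)) = qcnj (Jform n j i)"
      using cols \<open>i \<le> n\<close> by simp
    then show ?thesis
      using False by (auto simp: qcnj_hform Jform_def)
  qed (use cols \<open>j \<le> n\<close> in simp)
qed

lemma hform_columns_Sp:
  "g \<in> Sp n \<Longrightarrow> i \<le> n \<Longrightarrow> j \<le> n \<Longrightarrow> hform n (mcol g i) (mcol g j) = Jform n i j"
  using hform_columns[of i n j g] Sp_eq[of g n] by simp

lemma hform_mvec_Sp:
  assumes g: "g \<in> Sp n"
  shows "hform n (mvec n g a) (mvec n g b) = hform n a b"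
proof -
  have "hform n (mvec n g a) (mvec n g b)
      = (\<Sum>k\<le>n. \<Sum>m\<le>n. \<Sum>l\<le>n. qcnj (a l) * (qcnj (g k l) * (jdiag n k * (g k m * b m))))"
    unfolding hform_def mvec_def
    by (simp add: qcnj_sum qcnj_mult sum_distrib_left sum_distrib_right mult.assoc)
  also have "\<dots> = (\<Sum>l\<le>n. \<Sum>m\<le>n. \<Sum>k\<le>n. qcnj (a l) * (qcnj (g k l) * (jdiag n k * (g k m * b m))))"
    by (rule sum_rotate3)
  also have "\<dots> = (\<Sum>l\<le>n. \<Sum>m\<le>n. qcnj (a l) * (\<Sum>k\<le>n. qcnj (g k l) * jdiag n k * g k m) * b m)"
    by (simp add: sum_distrib_left sum_distrib_right mult.assoc)
  also have "\<dots> = (\<Sum>l\<le>n. \<Sum>m\<le>n. qcnj (a l) * Jform n l m * b m)"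
    using hform_columns_Sp[OF g] by (simp add: hform_def mcol_def)
  also have "\<dots> = hform n a b"
    by (simp add: Jform_eq_jdiag hform_def if_distrib[of "\<lambda>x. _ * x"] if_distrib[of "\<lambda>x. x * _"]
        cong: if_cong)
  finally show ?thesis .
qed

lemma cosh_mult_self: "cosh t * cosh t = 1 + sinh t * sinh t"
  for t :: real
  using cosh_square_eq[of t] by (simp add: power2_eq_square)

lemma cosh_mult_cosh_mult: "cosh t * (cosh t * x) = x + sinh t * (sinh t * x)"
  for t x :: real
  by (metis cosh_mult_self mult.assoc distrib_right mult_1)

lemma expH_of_real:
  "expH n t i j = (if (i = 0 \<and> j = 0) \<or> (i = n \<and> j = n) then of_real (cosh t)
     else if (i = 0 \<and> j = n) \<or> (i = n \<and> j = 0) then of_real (sinh t)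
     else if i = j \<and> i < n then 1 else 0)"
  by (simp add: expH_def qreal_eq_of_real)

lemma is_mat_expH [simp]: "is_mat n (expH n t)"
  by (auto simp: is_mat_def expH_def)

lemma sum_mult_expH_right:
  assumes n: "0 < n" and j: "j \<le> n"
  shows "(\<Sum>k\<le>n. f k * expH n t k j) =
    (if j = 0 then f 0 * of_real (cosh t) + f n * of_real (sinh t)
     else if j = n then f 0 * of_real (sinh t) + f n * of_real (cosh t) else f j)"
proof (cases "j = 0 \<or> j = n")
  case True
  then show ?thesis
    using n by (auto simp: sum_atMost_two_terms expH_of_real)
next
  case False
  then have "(\<Sum>k\<le>n. f k * expH n t k j) = (\<Sum>k\<le>n. if k = j then f k else 0)"
    by (intro sum.cong) (auto simp: expH_of_real)
  then show ?thesis
    using False j by simp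
qed

lemma sum_expH_mult_left:
  assumes n: "0 < n" and i: "i \<le> n"
  shows "(\<Sum>k\<le>n. expH n t i k * f k) =
    (if i = 0 then of_real (cosh t) * f 0 + of_real (sinh t) * f n
     else if i = n then of_real (sinh t) * f 0 + of_real (cosh t) * f n else f i)"
proof (cases "i = 0 \<or> i = n")
  case True
  then show ?thesis
    using n by (auto simp: sum_atMost_two_terms expH_of_real)
next
  case False
  then have "(\<Sum>k\<le>n. expH n t i k * f k) = (\<Sum>k\<le>n. if k = i then f k else 0)"
    by (intro sum.cong) (auto simp: expH_of_real)
  then show ?thesis
    using False i by simp
qed

lemma mmul_expH_right:
  assumes "0 < n"
  shows "mmul n A (expH n t) i j = (if i \<le> n \<and> j \<le> n then
     (if j = 0 then A i 0 * of_real (cosh t) + A i n * of_real (sinh t)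
      else if j = n then A i 0 * of_real (sinh t) + A i n * of_real (cosh t) else A i j) else 0)"
  using sum_mult_expH_right[OF assms] by (simp add: mmul_def)

lemma mmul_expH_left:
  assumes "0 < n"
  shows "mmul n (expH n t) A i j = (if i \<le> n \<and> j \<le> n then
     (if i = 0 then of_real (cosh t) * A 0 j + of_real (sinh t) * A n j
      else if i = n then of_real (sinh t) * A 0 j + of_real (cosh t) * A n j else A i j) else 0)"
  using sum_expH_mult_left[OF assms] by (simp add: mmul_def)

lemma mvec_expH:
  assumes "0 < n"
  shows "mvec n (expH n t) z i = (if i \<le> n then
     (if i = 0 then of_real (cosh t) * z 0 + of_real (sinh t) * z n
      else if i = n then of_real (sinh t) * z 0 + of_real (cosh t) * z n else z i) else 0)"
  using sum_expH_mult_left[OF assms] by (simp add: mvec_def)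

lemma expH_add:
  assumes n: "0 < n"
  shows "mmul n (expH n s) (expH n t) = expH n (s + t)"
  using n by (auto simp: mmul_expH_right expH_of_real cosh_add sinh_add algebra_simps intro!: ext
      simp flip: of_real_mult of_real_add)

lemma expH_zero: "expH n 0 = mid n"
  by (auto simp: expH_of_real mid_def intro!: ext)

lemma madj_expH [simp]: "madj n (expH n t) = expH n t"
  by (auto simp: madj_def expH_of_real is_mat_def intro!: ext)

lemma expH_Sp:
  assumes n: "0 < n"
  shows "expH n t \<in> Sp n"
  unfolding Sp_def madj_expH mmul_Jform_right
  using n by (auto simp: mmul_expH_right expH_of_real Jform_def jdiag_def algebra_simps cosh_mult_self
      intro!: ext simp flip: of_real_mult of_real_diff)

lemma Sp_last_column_norm:
  assumes "g \<in> Sp n"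
  shows "(norm (g n n))^2 = 1 + (\<Sum>k<n. (norm (g k n))^2)"
proof -
  have "hform n (mcol g n) (mcol g n) = - 1"
    using hform_columns_Sp[OF assms, of n n] by (simp add: Jform_def)
  then have "of_real ((\<Sum>k<n. (norm (g k n))^2) - (norm (g n n))^2) = (of_real (- 1) :: quat)"
    by (simp add: hform_self mcol_def)
  then show ?thesis
    by (simp only: of_real_eq_iff)
qed

lemma Sp_last_row_norm:
  assumes "g \<in> Sp n"
  shows "(norm (g n n))^2 = 1 + (\<Sum>k<n. (norm (g n k))^2)"
  using Sp_last_column_norm[OF madj_Sp[OF assms]] by (simp add: madj_def)

lemma Sp_corner_nonzero:
  assumes "g \<in> Sp n"
  shows "g n n \<noteq> 0"
proof
  assume "g n n = 0"
  then show False
    using Sp_last_column_norm[OF assms] by (smt (verit) norm_zero power_zero_numeral sum_nonneg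
        zero_le_power2)
qed

lemma Kgrp_entries: "k \<in> Kgrp n \<Longrightarrow> i < n \<Longrightarrow> k i n = 0 \<and> k n i = 0"
  by (simp add: Kgrp_def)

lemma Kgrp_Sp: "k \<in> Kgrp n \<Longrightarrow> k \<in> Sp n"
  by (simp add: Kgrp_def)

lemma Kgrp_norm_corner: "k \<in> Kgrp n \<Longrightarrow> norm (k n n) = 1"
  using Sp_last_column_norm[OF Kgrp_Sp, of k n] by (simp add: Kgrp_entries power2_eq_1_iff)
    (smt (verit) norm_ge_zero)

lemma Kgrp_of_last_column:
  assumes y: "y \<in> Sp n" and last_col: "\<And>i. i < n \<Longrightarrow> y i n = 0"
  shows "y \<in> Kgrp n"
proof -
  have "(norm (y n n))^2 = 1"
    using Sp_last_column_norm[OF y] last_col by simp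
  then have "(\<Sum>k<n. (norm (y n k))^2) = 0"
    using Sp_last_row_norm[OF y] by simp
  then show ?thesis
    using y last_col by (simp add: Kgrp_def sum_power2_norm_eq_0_iff)
qed

section \<open>The Cartan projection\<close>

(* Reflection of the first n coordinates in the hyperplane orthogonal to u, with p in the corner;
   for u = 0 the junk value 2 / 0 = 0 makes it the identity. *)
definition householder :: "nat \<Rightarrow> (nat \<Rightarrow> quat) \<Rightarrow> quat \<Rightarrow> qmat" where
  "householder n u p = (\<lambda>i j. if i \<le> n \<and> j \<le> n then
     (if j < n then evec j i - u i * of_real (2 / (\<Sum>k<n. (norm (u k))^2)) * qcnj (u j)
      else evec n i * p)
   else 0)"

lemma householder_Kgrp:
  assumes u: "\<And>i. n \<le> i \<Longrightarrow> u i = 0" and p: "norm p = 1"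
  shows "householder n u p \<in> Kgrp n"
proof -
  define c where "c = (\<Sum>k<n. (norm (u k))^2)"
  define r :: quat where "r = of_real (2 / c)"
  define h where "h = householder n u p"
  have col_lt: "mcol h j = evec j - vscale u (r * qcnj (u j))" if "j < n" for j
    using that u by (auto simp: h_def householder_def mcol_def vscale_def evec_apply c_def r_def mult.assoc
        simp del: of_real_divide of_real_sum intro!: ext)
  have col_n: "mcol h n = vscale (evec n) p"
    by (auto simp: h_def householder_def mcol_def vscale_def evec_apply intro!: ext)
  have rc: "qcnj r = r"
    by (simp only: r_def qcnj_of_real)
  have huu: "hform n u u = of_real c"
    using u by (simp add: hform_self c_def)
  have "2 / c * c * (2 / c) = 2 * (2 / c)"
    by (cases "c = 0") simp_all
  then have rcr: "r * of_real c * r = 2 * r"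
    unfolding r_def by (metis of_real_mult of_real_numeral)
  have hform_lt: "hform n (mcol h i) (mcol h j) = (if i = j then 1 else 0)" if "i < n" "j < n" for i j
  proof -
    have "hform n (mcol h i) (mcol h j) = (if i = j then 1 else 0) - u i * r * qcnj (u j)
        - u i * r * qcnj (u j) + u i * (r * of_real c * r) * qcnj (u j)"
      using that by (simp add: col_lt hform_diff_left hform_diff_right hform_vscale_left
          hform_vscale_right hform_evec_left hform_evec_right huu qcnj_mult rc jdiag_def evec_apply
          algebra_simps)
    then show ?thesis
      by (simp only: rcr mult_2) (simp add: algebra_simps)
  qed
  have "h \<in> Sp n"
  proof (rule Sp_of_hform_columns)
    show "is_mat n h"
      by (simp add: is_mat_def h_def householder_def)
    fix i j assume "i \<le> n" "j \<le> n"
    then consider "i < n" "j < n" | "i < n" "j = n" | "i = n" "j < n" | "i = n" "j = n"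
      by linarith
    then show "hform n (mcol h i) (mcol h j) = Jform n i j"
    proof cases
      case 1
      then show ?thesis
        by (simp add: hform_lt Jform_def)
    next
      case 4
      then show ?thesis
        using p by (simp add: col_n hform_vscale_left hform_vscale_right hform_evec_right evec_apply
            Jform_def jdiag_def qcnj_mult_self)
    qed (simp_all add: col_lt col_n Jform_def hform_diff_left hform_diff_right
        hform_vscale_left hform_vscale_right hform_evec_left hform_evec_right evec_apply
        vscale_apply u)
  qed
  then show ?thesis
    unfolding h_def by (rule Kgrp_of_last_column) (simp add: householder_def evec_apply)
qed

lemma householder_first_column:
  assumes n: "0 < n" and w: "\<And>i. n \<le> i \<Longrightarrow> w i = 0" and w1: "(\<Sum>k<n. (norm (w k))^2) = 1"
    and l: "norm l = 1" and w0: "w 0 = l * of_real (norm (w 0))" and i: "i < n"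
  shows "householder n (\<lambda>i. (if i = 0 then l else 0) - w i) p i 0 * l = w i"
proof -
  define u where "u = (\<lambda>i. (if i = 0 then l else 0) - w i)"
  define c where "c = (\<Sum>k<n. (norm (u k))^2)"
  have w_split: "(\<Sum>k<n. (norm (w k))^2) = (norm (w 0))^2 + (\<Sum>k\<in>{1..<n}. (norm (w k))^2)"
    and u_split: "c = (norm (l - w 0))^2 + (\<Sum>k\<in>{1..<n}. (norm (w k))^2)"
    using n by (simp_all add: c_def u_def atLeast0LessThan[symmetric] sum.atLeast_Suc_lessThan)
  have "(norm (w 0))^2 \<le> 1"
    using w_split w1 by (smt (verit) sum_nonneg zero_le_power2)
  then have w0_le: "norm (w 0) \<le> 1"
    by (simp add: abs_square_le_1)
  have "l - w 0 = l - l * of_real (norm (w 0))"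
    by (rule arg_cong[OF w0])
  also have "\<dots> = l * of_real (1 - norm (w 0))"
    by (simp add: algebra_simps)
  finally have "norm (l - w 0) = 1 - norm (w 0)"
    using l w0_le by (simp only: norm_mult norm_of_real) simp
  then have "c = (1 - norm (w 0))^2 + (1 - (norm (w 0))^2)"
    using u_split w_split w1 by simp
  then have c: "c = 2 * (1 - norm (w 0))"
    by (simp add: power2_eq_square algebra_simps)
  show ?thesis
  proof (cases "c = 0")
    case True
    then have "(\<Sum>k\<in>{1..<n}. (norm (w k))^2) = 0" and "w 0 = l"
      using c w_split w1 w0 by simp_all
    then show ?thesis
      using True i by (auto simp: householder_def evec_apply u_def c_def sum_power2_norm_eq_0_iff)
  next
    case False
    have "qcnj (w 0) * l = of_real (norm (w 0))"
      by (subst w0) (simp add: qcnj_mult mult.assoc qcnj_mult_self l)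
    then have "qcnj (u 0) * l = of_real (1 - norm (w 0))"
      using l by (simp add: u_def qcnj_diff left_diff_distrib qcnj_mult_self)
    then have "of_real (2 / c) * qcnj (u 0) * l = of_real (2 / c * (1 - norm (w 0)))"
      by (simp only: mult.assoc of_real_mult)
    also have "\<dots> = 1"
      using False c by simp
    finally have "of_real (2 / c) * qcnj (u 0) * l = 1" .
    moreover have "householder n u p i 0 * l = evec 0 i * l - u i * (of_real (2 / c) * qcnj (u 0) * l)"
      using i n by (simp add: householder_def c_def algebra_simps del: of_real_divide of_real_sum)
    ultimately show ?thesis
      unfolding u_def[symmetric] by (simp add: u_def evec_apply)
  qed
qed

lemma exists_Kgrp_first_column:
  assumes n: "0 < n" and w: "\<And>i. n \<le> i \<Longrightarrow> w i = 0" and w1: "(\<Sum>k<n. (norm (w k))^2) = 1"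
    and q: "norm q = 1"
  obtains k l where "k \<in> Kgrp n" "norm l = 1" "\<And>i. i < n \<Longrightarrow> k i 0 * l = w i" "k n n * l = q"
proof -
  obtain l where l: "norm l = 1" and w0: "w 0 = l * of_real (norm (w 0))"
    by (rule quat_polar_decomposition)
  let ?k = "householder n (\<lambda>i. (if i = 0 then l else 0) - w i) (q * qcnj l)"
  have "?k \<in> Kgrp n"
    using w q l n by (intro householder_Kgrp) (simp_all add: norm_mult)
  moreover have "?k n n * l = q"
    using l by (simp add: householder_def evec_apply mult.assoc qcnj_mult_self)
  moreover have "?k i 0 * l = w i" if "i < n" for i
    using householder_first_column[OF n w w1 l w0 that] .
  ultimately show ?thesis
    using l that by blast
qed

lemma mmul_expH_cancel:
  assumes n: "0 < n" and k: "k \<in> Sp n" and x: "is_mat n x"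
  shows "mmul n (mmul n k (expH n s)) (mmul n (expH n (- s)) (mmul n (spinv n k) x)) = x"
proof -
  have "mmul n (mmul n k (expH n s)) (mmul n (expH n (- s)) (mmul n (spinv n k) x))
      = mmul n k (mmul n (mmul n (expH n s) (expH n (- s))) (mmul n (spinv n k) x))"
    by (simp add: mmul_assoc)
  also have "\<dots> = x"
    using n x by (simp add: expH_add expH_zero mmul_mid_left mmul_assoc[symmetric] spinv_right[OF k])
  finally show ?thesis .
qed

lemma corner_KAK:
  assumes n: "0 < n" and k1: "k1 \<in> Kgrp n" and k2: "k2 \<in> Kgrp n"
  shows "mmul n (mmul n k1 (expH n T)) k2 n n = k1 n n * of_real (cosh T) * k2 n n"
proof -
  have "mmul n (mmul n k1 (expH n T)) k2 n n
      = (\<Sum>l<n. mmul n k1 (expH n T) n l * k2 l n) + mmul n k1 (expH n T) n n * k2 n n"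
    by (simp add: mmul_def sum_atMost_eq_lessThan_plus[of _ n])
  also have "(\<Sum>l<n. mmul n k1 (expH n T) n l * k2 l n) = 0"
    using Kgrp_entries[OF k2] by simp
  also have "mmul n k1 (expH n T) n n = k1 n n * of_real (cosh T)"
    using n Kgrp_entries[OF k1 n] by (simp add: mmul_expH_right)
  finally show ?thesis by simp
qed

lemma norm_corner_KAK:
  assumes "0 < n" and k1: "k1 \<in> Kgrp n" and k2: "k2 \<in> Kgrp n"
  shows "norm (mmul n (mmul n k1 (expH n T)) k2 n n) = cosh T"
  by (simp add: corner_KAK[OF assms] norm_mult Kgrp_norm_corner[OF k1] Kgrp_norm_corner[OF k2])

lemma cartan_eqI:
  assumes n: "0 < n" and T: "0 \<le> T" and k1: "k1 \<in> Kgrp n" and k2: "k2 \<in> Kgrp n"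
    and x: "x = mmul n (mmul n k1 (expH n T)) k2"
  shows "cartan n x = T"
  unfolding cartan_def
proof (rule the_equality)
  show "0 \<le> T \<and> (\<exists>k1\<in>Kgrp n. \<exists>k2\<in>Kgrp n. x = mmul n (mmul n k1 (expH n T)) k2)"
    using T k1 k2 x by blast
next
  fix t assume "0 \<le> t \<and> (\<exists>k1\<in>Kgrp n. \<exists>k2\<in>Kgrp n. x = mmul n (mmul n k1 (expH n t)) k2)"
  then obtain k1' k2' where t: "0 \<le> t" and k1': "k1' \<in> Kgrp n" and k2': "k2' \<in> Kgrp n"
    and x': "x = mmul n (mmul n k1' (expH n t)) k2'"
    by blast
  have "cosh t = cosh T"
    using norm_corner_KAK[OF n k1' k2', of t] norm_corner_KAK[OF n k1 k2, of T] x x' by simp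
  then show "t = T"
    using t T by (metis arcosh_cosh_real)
qed

lemma Kgrp_factor_of_last_column:
  assumes n: "0 < n" and x: "x \<in> Sp n" and k: "k \<in> Kgrp n"
    and last_col: "mcol x n = mvec n k (\<lambda>i. if i = 0 then of_real (sinh T) * l
                                     else if i = n then of_real (cosh T) * l else 0)"
  shows "mmul n (expH n (- T)) (mmul n (spinv n k) x) \<in> Kgrp n"
proof -
  define z :: "nat \<Rightarrow> quat"
    where "z = (\<lambda>i. if i = 0 then of_real (sinh T) * l else if i = n then of_real (cosh T) * l else 0)"
  define k' where "k' = mmul n (expH n (- T)) (mmul n (spinv n k) x)"
  have kS: "k \<in> Sp n"
    using k by (rule Kgrp_Sp)
  have k'S: "k' \<in> Sp n"
    unfolding k'_def by (intro Sp_mmul expH_Sp spinv_Sp n kS x)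
  have "mcol k' n = mvec n k' (evec n)"
    using k'S by (simp add: mvec_evec Sp_is_mat)
  also have "\<dots> = mvec n (expH n (- T)) (mvec n (spinv n k) (mcol x n))"
    using x by (simp add: k'_def mvec_mmul mvec_evec Sp_is_mat)
  also have "\<dots> = mvec n (expH n (- T)) (mvec n (mmul n (spinv n k) k) z)"
    by (simp add: last_col z_def mvec_mmul)
  also have "\<dots> = mvec n (expH n (- T)) z"
    using n by (simp add: spinv_left[OF kS] mvec_mid is_vec_def z_def)
  finally have "k' i n = mvec n (expH n (- T)) z i" for i
    by (metis mcol_def)
  then show ?thesis
    unfolding k'_def[symmetric] using n
    by (intro Kgrp_of_last_column[OF k'S]) (auto simp: mvec_expH z_def mult.assoc[symmetric]
        simp flip: of_real_mult)
qed

lemma mvec_Kgrp_first_last: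
  assumes n: "0 < n" and k: "k \<in> Kgrp n"
  shows "mvec n k (\<lambda>i. if i = 0 then a else if i = n then b else 0)
    = (\<lambda>i. if i < n then k i 0 * a else if i = n then k n n * b else 0)"
  using n Kgrp_entries[OF k] Kgrp_entries[OF k n] by (auto simp: mvec_def sum_atMost_two_terms intro!: ext)

lemma exists_unit_vector_scaling:
  fixes v :: "nat \<Rightarrow> quat"
  assumes n: "0 < n"
  obtains w where "\<And>i. n \<le> i \<Longrightarrow> w i = 0" "(\<Sum>k<n. (norm (w k))^2) = 1"
    "\<And>i. i < n \<Longrightarrow> v i = w i * of_real (sqrt (\<Sum>k<n. (norm (v k))^2))"
proof -
  define B where "B = sqrt (\<Sum>k<n. (norm (v k))^2)"
  define w where "w i = (if i < n then if B = 0 then evec 0 i else v i * of_real (1 / B) else 0)" for i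
  have w_out: "w i = 0" if "n \<le> i" for i
    using that by (simp add: w_def)
  have w1: "(\<Sum>k<n. (norm (w k))^2) = 1"
  proof (cases "B = 0")
    case True
    then show ?thesis
      using n by (simp add: w_def evec_apply if_distrib[of "\<lambda>x. (norm x)^2"] cong: if_cong)
  next
    case False
    then have "(\<Sum>k<n. (norm (w k))^2) = (\<Sum>k<n. (norm (v k))^2) / B^2"
      by (simp add: w_def norm_quat_divide power_divide sum_divide_distrib)
    also have "\<dots> = 1"
      using False by (simp add: B_def sum_nonneg)
    finally show ?thesis .
  qed
  have v_w: "v i = w i * of_real B" if "i < n" for i
  proof (cases "B = 0")
    case True
    then have "v i = 0"
      using that by (simp add: B_def sum_nonneg sum_power2_norm_eq_0_iff)
    then show ?thesis
      using True by simp
  next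
    case False
    then show ?thesis
      using that by (simp add: w_def divide_inverse mult.assoc flip: of_real_mult)
  qed
  show ?thesis
    by (rule that[of w]) (use w_out w1 v_w in \<open>simp_all add: B_def\<close>)
qed

lemma exists_Kgrp_last_column:
  assumes n: "0 < n" and x: "x \<in> Sp n"
  obtains T k l where "0 \<le> T" "k \<in> Kgrp n"
    "mcol x n = mvec n k (\<lambda>i. if i = 0 then of_real (sinh T) * l
                               else if i = n then of_real (cosh T) * l else 0)"
proof -
  define B where "B = sqrt (\<Sum>k<n. (norm (x k n))^2)"
  define D where "D = norm (x n n)"
  have D2: "D^2 = 1 + B^2"
    using Sp_last_column_norm[OF x] by (simp add: D_def B_def sum_nonneg)
  have D1: "1 \<le> D"
    using D2 power2_le_imp_le[of 1 D] by (simp add: D_def)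
  define T where "T = arcosh D"
  have T0: "0 \<le> T" and coshT: "cosh T = D" and sinhT: "sinh T = B"
    using D1 D2 by (simp_all add: T_def sinh_arcosh_real B_def sum_nonneg)
  obtain w where w_out: "\<And>i. n \<le> i \<Longrightarrow> w i = 0" and w1: "(\<Sum>k<n. (norm (w k))^2) = 1"
    and x_w: "\<And>i. i < n \<Longrightarrow> x i n = w i * of_real B"
    unfolding B_def by (rule exists_unit_vector_scaling[OF n, of "\<lambda>i. x i n"]) blast
  define q where "q = x n n * of_real (1 / D)"
  have q: "norm q = 1"
    using D1 by (auto simp: q_def norm_quat_divide D_def)
  obtain k l where k: "k \<in> Kgrp n" and k_0: "\<And>i. i < n \<Longrightarrow> k i 0 * l = w i" and k_n: "k n n * l = q"
    using exists_Kgrp_first_column[OF n w_out w1 q] by blast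
  have "mcol x n = (\<lambda>i. if i < n then k i 0 * (of_real B * l) else if i = n then k n n * (of_real D * l) else 0)"
  proof (rule ext)
    fix i
    have "k i 0 * (of_real B * l) = x i n" if "i < n"
      using that k_0[OF that] x_w[OF that] by (simp add: of_real_quat_commute[of B l] mult.assoc[symmetric])
    moreover have "k n n * (of_real D * l) = x n n"
      using k_n D1 by (simp add: of_real_quat_commute[of D l] mult.assoc[symmetric] q_def divide_inverse
          mult.assoc flip: of_real_mult)
    ultimately show "mcol x n i = (if i < n then k i 0 * (of_real B * l)
        else if i = n then k n n * (of_real D * l) else 0)"
      using Sp_is_mat[OF x] by (auto simp: mcol_def is_mat_def)
  qed
  then show ?thesis
    by (intro that[of T k l, OF T0 k]) (simp only: mvec_Kgrp_first_last[OF n k] sinhT coshT)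
qed

lemma cartan_decomposition:
  assumes n: "0 < n" and x: "x \<in> Sp n"
  obtains T k1 k2 where "0 \<le> T" "k1 \<in> Kgrp n" "k2 \<in> Kgrp n"
    "x = mmul n (mmul n k1 (expH n T)) k2"
proof -
  obtain T k1 l where T: "0 \<le> T" and k1: "k1 \<in> Kgrp n"
    and last_col: "mcol x n = mvec n k1 (\<lambda>i. if i = 0 then of_real (sinh T) * l
                                         else if i = n then of_real (cosh T) * l else 0)"
    by (rule exists_Kgrp_last_column[OF n x])
  have "mmul n (expH n (- T)) (mmul n (spinv n k1) x) \<in> Kgrp n"
    by (rule Kgrp_factor_of_last_column[OF n x k1 last_col])
  then show ?thesis
    by (rule that[OF T k1]) (rule mmul_expH_cancel[OF n Kgrp_Sp[OF k1] Sp_is_mat[OF x], symmetric])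
qed

lemma cartan_Sp:
  assumes n: "0 < n" and x: "x \<in> Sp n"
  shows "0 \<le> cartan n x" and "cosh (cartan n x) = norm (x n n)"
proof -
  obtain T k1 k2 where T: "0 \<le> T" and k1: "k1 \<in> Kgrp n" and k2: "k2 \<in> Kgrp n"
    and x_eq: "x = mmul n (mmul n k1 (expH n T)) k2"
    by (rule cartan_decomposition[OF n x])
  then have "cartan n x = T"
    by (intro cartan_eqI[OF n])
  then show "0 \<le> cartan n x" and "cosh (cartan n x) = norm (x n n)"
    using T norm_corner_KAK[OF n k1 k2, of T] x_eq by simp_all
qed

section \<open>The subgroup N\<close>

lemma mnorm_le_sum_norm: "mnorm n A \<le> (\<Sum>i\<le>n. \<Sum>j\<le>n. norm (A i j))"
proof -
  have "(\<Sum>i\<le>n. \<Sum>j\<le>n. (norm (A i j))^2) \<le> (\<Sum>i\<le>n. (\<Sum>j\<le>n. norm (A i j))^2)"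
    by (intro sum_mono sum_power2_le_power2_sum) auto
  also have "\<dots> \<le> (\<Sum>i\<le>n. \<Sum>j\<le>n. norm (A i j))^2"
    by (intro sum_power2_le_power2_sum) (simp_all add: sum_nonneg)
  finally show ?thesis
    unfolding mnorm_def qnorm_eq_norm by (simp add: real_le_lsqrt sum_nonneg)
qed

lemma norm_entry_le_mnorm:
  assumes "i \<le> n" "j \<le> n"
  shows "norm (A i j) \<le> mnorm n A"
proof -
  have "(norm (A i j))^2 \<le> (\<Sum>j\<le>n. (norm (A i j))^2)"
    using assms by (intro member_le_sum) auto
  also have "\<dots> \<le> (\<Sum>i\<le>n. \<Sum>j\<le>n. (norm (A i j))^2)"
    using assms by (intro member_le_sum[where f="\<lambda>i. \<Sum>j\<le>n. (norm (A i j))^2"])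
      (simp_all add: sum_nonneg)
  finally show ?thesis
    unfolding mnorm_def qnorm_eq_norm by (simp add: real_le_rsqrt)
qed

lemma norm_entry_le_sum_norm:
  fixes A :: "nat \<Rightarrow> nat \<Rightarrow> 'a::real_normed_vector"
  assumes "i \<le> n" "j \<le> n"
  shows "norm (A i j) \<le> (\<Sum>i\<le>n. \<Sum>j\<le>n. norm (A i j))"
proof -
  have "norm (A i j) \<le> (\<Sum>j\<le>n. norm (A i j))"
    using assms by (intro member_le_sum) auto
  also have "\<dots> \<le> (\<Sum>i\<le>n. \<Sum>j\<le>n. norm (A i j))"
    using assms by (intro member_le_sum[where f="\<lambda>i. \<Sum>j\<le>n. norm (A i j)"]) (auto simp: sum_nonneg)
  finally show ?thesis .
qed

lemma mnorm_tendsto_0: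
  assumes "\<And>t i j. 0 \<le> t \<Longrightarrow> i \<le> n \<Longrightarrow> j \<le> n \<Longrightarrow> norm (A t i j) \<le> exp (- t) * C"
  shows "((\<lambda>t. mnorm n (A t)) \<longlongrightarrow> 0) at_top"
proof (rule tendsto_sandwich)
  show "\<forall>\<^sub>F t in at_top. 0 \<le> mnorm n (A t)"
    by (simp add: mnorm_def sum_nonneg)
  show "\<forall>\<^sub>F t in at_top. mnorm n (A t) \<le> (real (Suc n) * real (Suc n) * C) * exp (- t)"
  proof (rule eventually_at_top_linorderI)
    fix t :: real assume "0 \<le> t"
    have "mnorm n (A t) \<le> (\<Sum>i\<le>n. \<Sum>j\<le>n. norm (A t i j))"
      by (rule mnorm_le_sum_norm)
    also have "\<dots> \<le> (\<Sum>i\<le>n. \<Sum>j\<le>n. exp (- t) * C)"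
      using assms[OF \<open>0 \<le> t\<close>] by (intro sum_mono) auto
    finally show "mnorm n (A t) \<le> (real (Suc n) * real (Suc n) * C) * exp (- t)"
      by (simp add: algebra_simps)
  qed
  show "((\<lambda>t. real (Suc n) * real (Suc n) * C * exp (- t)) \<longlongrightarrow> 0) at_top"
    by (intro tendsto_mult_right_zero filterlim_compose[OF exp_at_bot filterlim_uminus_at_bot_at_top])
qed simp

lemma expH_conj_entry:
  assumes n: "0 < n" and i: "i \<le> n" and j: "j \<le> n"
  shows "mmul n (mmul n (expH n (- t)) m) (expH n t) i j =
    (let Y = (\<lambda>k. if i = 0 then of_real (cosh t) * m 0 k - of_real (sinh t) * m n k
                  else if i = n then of_real (cosh t) * m n k - of_real (sinh t) * m 0 k
                  else m i k)
     in if j = 0 then Y 0 * of_real (cosh t) + Y n * of_real (sinh t)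
        else if j = n then Y 0 * of_real (sinh t) + Y n * of_real (cosh t) else Y j)"
  using n i j by (simp add: mmul_expH_right mmul_expH_left Let_def algebra_simps)

(* The shape of the elements of N built in the Iwasawa decomposition; it forces every entry of
   exp(-tH) m exp(tH) - 1 to carry a factor e^-t. *)
definition Ngrp_pattern :: "nat \<Rightarrow> qmat \<Rightarrow> bool" where
  "Ngrp_pattern n m \<longleftrightarrow> m 0 n = 1 - m 0 0 \<and> m n 0 = m 0 0 - 1 \<and> m n n = 2 - m 0 0
    \<and> (\<forall>i. 0 < i \<and> i < n \<longrightarrow> m i n = - m i 0) \<and> (\<forall>j. 0 < j \<and> j < n \<longrightarrow> m n j = m 0 j)
    \<and> (\<forall>i j. 0 < i \<and> i < n \<and> 0 < j \<and> j < n \<longrightarrow> m i j = mid n i j)"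

lemma expH_conj_minus_mid:
  fixes t :: real
  assumes n: "0 < n" and m: "Ngrp_pattern n m"
  defines "E \<equiv> \<lambda>i j. mmul n (mmul n (expH n (- t)) m) (expH n t) i j - mid n i j"
  shows "i \<in> {0, n} \<Longrightarrow> j \<in> {0, n} \<Longrightarrow>
      E i j = of_real ((exp (- t))^2) * (if j = 0 then m 0 0 - 1 else 1 - m 0 0)"
    and "i \<in> {0, n} \<Longrightarrow> 0 < j \<Longrightarrow> j < n \<Longrightarrow> E i j = of_real (exp (- t)) * m 0 j"
    and "0 < i \<Longrightarrow> i < n \<Longrightarrow> j \<in> {0, n} \<Longrightarrow> E i j = of_real (exp (- t)) * m i j"
    and "0 < i \<Longrightarrow> i < n \<Longrightarrow> 0 < j \<Longrightarrow> j < n \<Longrightarrow> E i j = 0"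
proof -
  define ch where "ch = cosh t"
  define sh where "sh = sinh t"
  have cs: "ch * ch = 1 + sh * sh" and cc: "ch * (ch * x) = x + sh * (sh * x)" for x
    by (simp_all add: ch_def sh_def cosh_mult_self cosh_mult_cosh_mult)
  have e: "exp (- t) = ch - sh"
    by (simp add: ch_def sh_def cosh_minus_sinh)
  have E: "E i j = (let Y = (\<lambda>k. if i = 0 then of_real ch * m 0 k - of_real sh * m n k
                              else if i = n then of_real ch * m n k - of_real sh * m 0 k else m i k)
       in if j = 0 then Y 0 * of_real ch + Y n * of_real sh
          else if j = n then Y 0 * of_real sh + Y n * of_real ch else Y j) - mid n i j"
    if "i \<le> n" "j \<le> n" for i j
    using n that by (simp add: E_def expH_conj_entry ch_def sh_def)
  have p: "m 0 n = 1 - m 0 0" "m n 0 = m 0 0 - 1" "m n n = 2 - m 0 0"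
    "\<And>i. 0 < i \<Longrightarrow> i < n \<Longrightarrow> m i n = - m i 0" "\<And>j. 0 < j \<Longrightarrow> j < n \<Longrightarrow> m n j = m 0 j"
    "\<And>i j. 0 < i \<Longrightarrow> i < n \<Longrightarrow> 0 < j \<Longrightarrow> j < n \<Longrightarrow> m i j = mid n i j"
    using m by (simp_all add: Ngrp_pattern_def)
  show "E i j = of_real ((exp (- t))^2) * (if j = 0 then m 0 0 - 1 else 1 - m 0 0)"
    if "i \<in> {0, n}" "j \<in> {0, n}"
    using that n by (auto simp: E e Let_def mid_def p quat_eq_iff algebra_simps power2_eq_square cs cc)
  show "E i j = of_real (exp (- t)) * m 0 j" if "i \<in> {0, n}" "0 < j" "j < n"
    using that n by (auto simp: E e Let_def mid_def p quat_eq_iff algebra_simps)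
  show "E i j = of_real (exp (- t)) * m i j" if "0 < i" "i < n" "j \<in> {0, n}"
    using that n by (auto simp: E e Let_def mid_def p quat_eq_iff algebra_simps)
  show "E i j = 0" if "0 < i" "i < n" "0 < j" "j < n"
    using that n by (simp add: E Let_def p)
qed

lemma expH_conj_entry_bound:
  assumes n: "0 < n" and t: "0 \<le> t" and i: "i \<le> n" and j: "j \<le> n" and m: "Ngrp_pattern n m"
  shows "norm (mmul n (mmul n (expH n (- t)) m) (expH n t) i j - mid n i j)
    \<le> exp (- t) * (norm (m 0 0 - 1) + (\<Sum>i\<le>n. \<Sum>j\<le>n. norm (m i j)))"
proof -
  define C where "C = norm (m 0 0 - 1) + (\<Sum>i\<le>n. \<Sum>j\<le>n. norm (m i j))"
  have C_entry: "norm (m k l) \<le> C" if "k \<le> n" "l \<le> n" for k l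
    using norm_entry_le_sum_norm[OF that, of m] unfolding C_def by (smt (verit) norm_ge_zero)
  have C_corner: "norm (if j = 0 then m 0 0 - 1 else 1 - m 0 0) \<le> C"
    by (simp add: C_def sum_nonneg norm_minus_commute)
  have e_bound: "norm (of_real (exp (- t)) * X) \<le> exp (- t) * C" if "norm X \<le> C" for X :: quat
    using that by (simp add: norm_mult mult_left_mono)
  have e2_bound: "norm (of_real ((exp (- t))^2) * X) \<le> exp (- t) * C" if "norm X \<le> C" for X :: quat
  proof -
    have "exp (- t) * norm X \<le> 1 * C"
      using t that by (intro mult_mono) auto
    then show ?thesis
      by (simp add: norm_mult power2_eq_square mult.assoc mult_left_mono)
  qed
  consider "i \<in> {0, n}" "j \<in> {0, n}" | "i \<in> {0, n}" "0 < j" "j < n" | "0 < i" "i < n" "j \<in> {0, n}"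
    | "0 < i" "i < n" "0 < j" "j < n"
    using i j by (metis insert_iff le_neq_implies_less neq0_conv)
  then have "norm (mmul n (mmul n (expH n (- t)) m) (expH n t) i j - mid n i j) \<le> exp (- t) * C"
  proof cases
    case 1
    then show ?thesis
      using e2_bound[OF C_corner] by (simp add: expH_conj_minus_mid(1)[OF n m])
  next
    case 2
    then show ?thesis
      using e_bound[OF C_entry[OF _ j]] by (simp add: expH_conj_minus_mid(2)[OF n m])
  next
    case 3
    then show ?thesis
      using e_bound[OF C_entry[OF i j]] by (simp add: expH_conj_minus_mid(3)[OF n m])
  next
    case 4
    then show ?thesis
      using C_corner by (simp add: expH_conj_minus_mid(4)[OF n m] order_trans[OF norm_ge_zero])
  qed
  then show ?thesis
    by (simp add: C_def)
qed

lemma Ngrp_of_pattern: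
  assumes n: "0 < n" and m: "m \<in> Sp n" and pattern: "Ngrp_pattern n m"
  shows "m \<in> Ngrp n"
proof -
  have "((\<lambda>t. mnorm n (mdiff (mmul n (mmul n (expH n (- t)) m) (expH n t)) (mid n))) \<longlongrightarrow> 0) at_top"
    by (rule mnorm_tendsto_0) (use expH_conj_entry_bound[OF n _ _ _ pattern] in \<open>simp add: mdiff_def\<close>)
  then show ?thesis
    using m by (simp add: Ngrp_def)
qed

lemma Ngrp_fixes_nullvec:
  assumes n: "0 < n" and m: "m \<in> Ngrp n"
  shows "m 0 0 + m 0 n = 1" and "m n 0 + m n n = 1"
proof -
  define D where "D t = mdiff (mmul n (mmul n (expH n (- t)) m) (expH n t)) (mid n)" for t
  have "((\<lambda>t. mnorm n (D t)) \<longlongrightarrow> 0) at_top"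
    using m by (simp add: Ngrp_def D_def)
  then have lim: "((\<lambda>t. 4 * mnorm n (D t)) \<longlongrightarrow> 0) at_top"
    by (rule tendsto_mult_right_zero)
  define P where "P = m 0 0 + m 0 n"
  define Q where "Q = m n 0 + m n n"
  (* The corner sum of D t is constant in t while the signed corner sum grows like e^2t, and both
     tend to 0. *)
  have sum: "D t 0 0 + D t 0 n + D t n 0 + D t n n = P + Q - 2"
    and diff: "(D t 0 0 + D t 0 n) - (D t n 0 + D t n n) = of_real ((exp t)^2) * (P - Q)" for t
    using n by (simp_all add: D_def mdiff_def expH_conj_entry Let_def mid_def P_def Q_def quat_eq_iff
        algebra_simps power2_eq_square cosh_mult_self cosh_mult_cosh_mult flip: cosh_plus_sinh)
  have bound4: "norm (D t 0 0 + D t 0 n + D t n 0 + D t n n) \<le> 4 * mnorm n (D t)"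
    "norm ((D t 0 0 + D t 0 n) - (D t n 0 + D t n n)) \<le> 4 * mnorm n (D t)" for t
  proof -
    have "norm (D t i j) \<le> mnorm n (D t)" if "i \<le> n" "j \<le> n" for i j
      using that by (rule norm_entry_le_mnorm)
    then have "norm (D t 0 0) + norm (D t 0 n) + norm (D t n 0) + norm (D t n n) \<le> 4 * mnorm n (D t)"
      by (smt (verit) le_refl zero_le)
    then show "norm (D t 0 0 + D t 0 n + D t n 0 + D t n n) \<le> 4 * mnorm n (D t)"
      "norm ((D t 0 0 + D t 0 n) - (D t n 0 + D t n n)) \<le> 4 * mnorm n (D t)"
      by (smt (verit) norm_triangle_ineq norm_triangle_ineq4)+
  qed
  have "norm (P + Q - 2) \<le> 0"
    by (rule tendsto_le[OF _ lim tendsto_const]) (use bound4(1) sum in auto)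
  moreover have "norm (P - Q) \<le> 0"
  proof (rule tendsto_le[OF _ lim tendsto_const])
    show "\<forall>\<^sub>F t in at_top. norm (P - Q) \<le> 4 * mnorm n (D t)"
    proof (rule eventually_at_top_linorderI[of 0])
      fix t :: real assume "0 \<le> t"
      then have "norm (P - Q) \<le> (exp t)^2 * norm (P - Q)"
        by (simp add: mult_le_cancel_right1)
      also have "\<dots> \<le> 4 * mnorm n (D t)"
        using bound4(2)[of t] diff[of t] by (simp add: norm_mult norm_power)
      finally show "norm (P - Q) \<le> 4 * mnorm n (D t)" .
    qed
  qed simp
  ultimately have "P + Q = 2" "P = Q"
    by simp_all
  then show "m 0 0 + m 0 n = 1" and "m n 0 + m n n = 1"
    by (simp_all add: P_def Q_def quat_eq_iff)
qed

section \<open>The Iwasawa projection\<close>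

(* An isotropic vector which exp(tH) scales by e^t and N fixes, so that the last coordinate of
   x (e_0 + e_n) determines the Iwasawa projection of x. *)
definition nullvec :: "nat \<Rightarrow> nat \<Rightarrow> quat" where
  "nullvec n = evec 0 + evec n"

lemma nullvec_apply: "nullvec n i = (if i = 0 then 1 else 0) + (if i = n then 1 else 0)"
  by (simp add: nullvec_def evec_apply)

lemma is_vec_nullvec: "is_vec n (nullvec n)"
  by (simp add: is_vec_def nullvec_apply)

lemma mvec_nullvec: "0 < n \<Longrightarrow> i \<le> n \<Longrightarrow> mvec n A (nullvec n) i = A i 0 + A i n"
  by (simp add: mvec_def sum_atMost_two_terms nullvec_apply)

lemma hform_nullvec_right: "0 < n \<Longrightarrow> hform n z (nullvec n) = qcnj (z 0) - qcnj (z n)"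
  by (simp add: nullvec_def hform_add_right hform_evec_right jdiag_def)

lemma mvec_expH_nullvec: "0 < n \<Longrightarrow> mvec n (expH n t) (nullvec n) = vscale (nullvec n) (of_real (exp t))"
  by (auto simp: mvec_expH nullvec_apply vscale_apply simp flip: of_real_add cosh_plus_sinh intro!: ext)

lemma mvec_expH_evec: "0 < j \<Longrightarrow> j < n \<Longrightarrow> mvec n (expH n t) (evec j) = evec j"
  by (auto simp: mvec_expH evec_apply intro!: ext)

lemma corner_KAN:
  assumes n: "0 < n" and k: "k \<in> Kgrp n" and m: "m \<in> Ngrp n"
  shows "mvec n (mmul n (mmul n k (expH n s)) m) (nullvec n) n = k n n * of_real (exp s)"
proof -
  define W where "W = mvec n (expH n s) (mvec n m (nullvec n))"
  have "W n = of_real (exp s)"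
    using n Ngrp_fixes_nullvec[OF n m]
    by (simp add: W_def mvec_expH mvec_nullvec flip: of_real_add cosh_plus_sinh)
  moreover have "mvec n (mmul n (mmul n k (expH n s)) m) (nullvec n) = mvec n k W"
    by (simp add: mvec_mmul W_def)
  then have "mvec n (mmul n (mmul n k (expH n s)) m) (nullvec n) n = (\<Sum>l<n. k n l * W l) + k n n * W n"
    by (simp add: mvec_def sum_atMost_eq_lessThan_plus[of _ n])
  ultimately show ?thesis
    using Kgrp_entries[OF k] by simp
qed

lemma iwasawa_eqI:
  assumes n: "0 < n" and k: "k \<in> Kgrp n" and m: "m \<in> Ngrp n"
    and x: "x = mmul n (mmul n k (expH n s)) m"
  shows "iwasawa n x = s"
  unfolding iwasawa_def
proof (rule the_equality)
  show "\<exists>\<kappa>\<in>Kgrp n. \<exists>m\<in>Ngrp n. x = mmul n (mmul n \<kappa> (expH n s)) m"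
    using k m x by blast
next
  fix s' assume "\<exists>\<kappa>\<in>Kgrp n. \<exists>m\<in>Ngrp n. x = mmul n (mmul n \<kappa> (expH n s')) m"
  then obtain k' m' where k': "k' \<in> Kgrp n" and m': "m' \<in> Ngrp n"
    and x': "x = mmul n (mmul n k' (expH n s')) m'"
    by blast
  have "exp s' = norm (mvec n x (nullvec n) n)"
    using corner_KAN[OF n k' m', of s'] x' by (simp add: norm_mult Kgrp_norm_corner[OF k'])
  also have "\<dots> = exp s"
    using corner_KAN[OF n k m, of s] x by (simp add: norm_mult Kgrp_norm_corner[OF k])
  finally show "s' = s"
    by simp
qed

lemma Ngrp_of_fixes:
  assumes n: "0 < n" and m: "m \<in> Sp n"
    and fix_nullvec: "mvec n m (nullvec n) = nullvec n"
    and fix_mod_nullvec: "\<And>j. 0 < j \<Longrightarrow> j < n \<Longrightarrow> mvec n m (evec j) = evec j + vscale (nullvec n) (c j)"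
  shows "m \<in> Ngrp n"
proof -
  have mm: "is_mat n m"
    using m by (rule Sp_is_mat)
  have P1: "m i 0 + m i n = nullvec n i" if "i \<le> n" for i
    using that n fix_nullvec mvec_nullvec[OF n that, of m] by simp
  have P2: "m i j = evec j i + nullvec n i * c j" if "i \<le> n" "0 < j" "j < n" for i j
  proof -
    have "m i j = mvec n m (evec j) i"
      using that mm by (simp add: mvec_evec mcol_def)
    then show ?thesis
      using that by (simp add: fix_mod_nullvec vscale_apply)
  qed
  have "hform n (mvec n m (evec 0 - evec n)) (mvec n m (nullvec n)) = hform n (evec 0 - evec n) (nullvec n)"
    by (rule hform_mvec_Sp[OF m])
  then have "qcnj (m 0 0 - m 0 n) - qcnj (m n 0 - m n n) = 2"
    using n mm by (simp add: fix_nullvec hform_nullvec_right mvec_diff mvec_evec mcol_def evec_apply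
        qcnj_minus)
  then have P3: "m 0 0 - m 0 n - (m n 0 - m n n) = 2"
    by (metis qcnj_diff qcnj_numeral qcnj_qcnj)
  have a0: "m 0 0 + m 0 n = 1" and an: "m n 0 + m n n = 1"
    using P1[of 0] P1[of n] n by (simp_all add: nullvec_apply)
  have "Ngrp_pattern n m"
    unfolding Ngrp_pattern_def
  proof (intro conjI allI impI)
    show "m 0 n = 1 - m 0 0"
      using a0 by (simp add: algebra_simps)
    show "m n 0 = m 0 0 - 1" "m n n = 2 - m 0 0"
      using a0 an P3 by (simp_all add: quat_eq_iff)
    show "m i n = - m i 0" if "0 < i \<and> i < n" for i
      using P1[of i] that by (simp add: nullvec_apply eq_neg_iff_add_eq_0 add.commute)
    show "m n j = m 0 j" if "0 < j \<and> j < n" for j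
      using P2[of n j] P2[of 0 j] that n by (simp add: nullvec_apply evec_apply)
    show "m i j = mid n i j" if "0 < i \<and> i < n \<and> 0 < j \<and> j < n" for i j
      using P2[of i j] that by (simp add: nullvec_apply evec_apply mid_def)
  qed
  then show ?thesis
    by (rule Ngrp_of_pattern[OF n m])
qed

lemma Sp_nullvec_image:
  assumes n: "0 < n" and x: "x \<in> Sp n"
  shows "(\<Sum>k<n. (norm (mvec n x (nullvec n) k))^2) = (norm (mvec n x (nullvec n) n))^2"
    and "mvec n x (nullvec n) n \<noteq> 0"
proof -
  define w where "w = mvec n x (nullvec n)"
  have "hform n w w = hform n (nullvec n) (nullvec n)"
    unfolding w_def by (rule hform_mvec_Sp[OF x])
  also have "\<dots> = 0"
    using n by (simp add: hform_nullvec_right nullvec_apply)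
  finally have "of_real ((\<Sum>k<n. (norm (w k))^2) - (norm (w n))^2) = (of_real 0 :: quat)"
    by (simp add: hform_self)
  then show sum_w: "(\<Sum>k<n. (norm (w k))^2) = (norm (w n))^2"
    unfolding w_def of_real_eq_iff by simp
  show "w n \<noteq> 0"
  proof
    assume "w n = 0"
    then have "w i = 0" for i
      using sum_w is_vec_mvec[of n x "nullvec n"]
      by (cases "i < n"; cases "i = n") (auto simp: w_def is_vec_def sum_power2_norm_eq_0_iff)
    then have "mvec n (spinv n x) w 0 = 0"
      by (simp add: mvec_def)
    moreover have "mvec n (spinv n x) w = nullvec n"
      by (simp add: w_def mvec_mmul[symmetric] spinv_left[OF x] mvec_mid is_vec_nullvec)
    ultimately show False
      using n by (simp add: nullvec_apply)
  qed
qed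

lemma iwasawa_columns_hform:
  assumes n: "0 < n" and x: "x \<in> Sp n"
  defines "w \<equiv> mvec n x (nullvec n)"
  defines "col0 \<equiv> vscale (w - vscale (evec n) (w n)) (of_real (1 / norm (w n)))"
    and "colj \<equiv> \<lambda>j. mcol x j - vscale w (inverse (w n) * x n j)"
  shows "hform n col0 col0 = 1"
    and "0 < j \<Longrightarrow> j < n \<Longrightarrow> hform n col0 (colj j) = 0"
    and "0 < j \<Longrightarrow> j < n \<Longrightarrow> 0 < l \<Longrightarrow> l < n \<Longrightarrow> hform n (colj j) (colj l) = Jform n j l"
proof -
  have sum_w: "(\<Sum>k<n. (norm (w k))^2) = (norm (w n))^2" and wn: "w n \<noteq> 0"
    unfolding w_def by (rule Sp_nullvec_image[OF n x])+
  have hform_w_col: "hform n w (mcol x j) = 0" if "0 < j" "j < n" for j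
  proof -
    have "hform n w (mcol x j) = hform n (mvec n x (nullvec n)) (mvec n x (evec j))"
      using that Sp_is_mat[OF x] by (simp add: w_def mvec_evec)
    also have "\<dots> = hform n (nullvec n) (evec j)"
      by (rule hform_mvec_Sp[OF x])
    finally show ?thesis
      using that by (simp add: hform_evec_right nullvec_apply)
  qed
  have hform_col_w: "hform n (mcol x j) w = 0" if "0 < j" "j < n" for j
    using hform_w_col[OF that] qcnj_hform[of n w "mcol x j"] by simp
  have hform_ww: "hform n w w = 0"
    using sum_w by (simp add: hform_self)
  have "(\<Sum>k<n. (norm (col0 k))^2) = (\<Sum>k<n. (norm (w k))^2) / (norm (w n))^2"
    by (simp add: col0_def vscale_apply evec_apply norm_quat_divide power_divide sum_divide_distrib)
  then show "hform n col0 col0 = 1"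
    using wn by (simp add: hform_self sum_w col0_def vscale_apply evec_apply)
  have w_cancel: "w n * (inverse (w n) * y) = y" for y
    by (simp add: mult.assoc[symmetric] right_inverse[OF wn])
  show "hform n col0 (colj j) = 0" if "0 < j" "j < n"
    using that hform_w_col[OF that] hform_ww
    by (simp add: col0_def colj_def hform_vscale_left hform_diff_left hform_diff_right hform_vscale_right
        hform_evec_left vscale_apply mcol_def mult.assoc w_cancel jdiag_def)
  show "hform n (colj j) (colj l) = Jform n j l" if "0 < j" "j < n" "0 < l" "l < n"
    using that hform_w_col hform_col_w hform_ww hform_columns_Sp[OF x, of j l]
    by (simp add: colj_def hform_diff_left hform_diff_right hform_vscale_left hform_vscale_right)
qed

lemma iwasawa_Kgrp_part:
  assumes n: "0 < n" and x: "x \<in> Sp n"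
  defines "w \<equiv> mvec n x (nullvec n)"
  obtains k where "k \<in> Kgrp n" "mvec n k (vscale (nullvec n) (of_real (norm (w n)))) = w"
    "\<And>j. 0 < j \<Longrightarrow> j < n \<Longrightarrow> mvec n k (evec j) = mcol x j - vscale w (inverse (w n) * x n j)"
proof -
  have wv: "is_vec n w"
    by (simp add: w_def)
  have wn: "w n \<noteq> 0"
    unfolding w_def by (rule Sp_nullvec_image(2)[OF n x])
  define r :: quat where "r = of_real (1 / norm (w n))"
  define col0 where "col0 = vscale (w - vscale (evec n) (w n)) r"
  define p where "p = w n * r"
  have p: "norm p = 1"
    using wn by (simp add: p_def r_def norm_quat_divide)
  define coln where "coln = vscale (evec n) p"
  define colj where "colj j = mcol x j - vscale w (inverse (w n) * x n j)" for j
  define k where "k i j = (if i \<le> n \<and> j \<le> n then if j = 0 then col0 i else if j = n then coln i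
                          else colj j i else 0)" for i j
  have col_k: "mcol k j = (if j = 0 then col0 else if j = n then coln else colj j)" if "j \<le> n" for j
    using that wv Sp_is_mat[OF x]
    by (auto simp: mcol_def k_def col0_def coln_def colj_def vscale_apply evec_apply is_vec_def is_mat_def
        intro!: ext)
  have col0_n: "col0 n = 0" and colj_n: "colj j n = 0" for j
    using wn by (simp_all add: col0_def colj_def vscale_apply evec_apply mcol_def mult.assoc[symmetric])
  have J00: "hform n col0 col0 = 1"
    unfolding col0_def r_def w_def by (rule iwasawa_columns_hform(1)[OF n x])
  have Jj0: "hform n col0 (colj j) = 0" if "0 < j" "j < n" for j
    using that unfolding col0_def colj_def r_def w_def by (rule iwasawa_columns_hform(2)[OF n x])
  have Jjl: "hform n (colj j) (colj l) = Jform n j l" if "0 < j" "j < n" "0 < l" "l < n" for j l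
    using that unfolding colj_def w_def by (rule iwasawa_columns_hform(3)[OF n x])
  have Jnn: "hform n coln coln = -1"
    using p by (simp add: coln_def hform_vscale_right hform_vscale_left hform_evec_right jdiag_def
        evec_apply qcnj_mult_self)
  have "k \<in> Sp n"
  proof (rule Sp_of_hform_columns_le)
    show "is_mat n k"
      by (simp add: is_mat_def k_def)
    show "hform n (mcol k i) (mcol k j) = Jform n i j" if "i \<le> j" "j \<le> n" for i j
      using that n J00 Jj0 Jjl Jnn
      by (auto simp: col_k Jform_def coln_def hform_vscale_right hform_evec_right col0_n colj_n)
  qed
  moreover have "mvec n k (vscale (nullvec n) (of_real (norm (w n)))) = w"
  proof (rule ext)
    fix i
    show "mvec n k (vscale (nullvec n) (of_real (norm (w n)))) i = w i"
    proof (cases "i \<le> n")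
      case True
      then have "mvec n k (nullvec n) i = w i * r"
        using n by (simp add: mvec_nullvec k_def col0_def coln_def p_def vscale_apply evec_apply
            algebra_simps)
      then show ?thesis
        using wn by (simp add: mvec_vscale vscale_apply r_def divide_inverse mult.assoc)
    qed (use wv in \<open>simp add: mvec_def is_vec_def\<close>)
  qed
  moreover have "mvec n k (evec j) = colj j" if "0 < j" "j < n" for j
    using that \<open>k \<in> Sp n\<close> by (simp add: mvec_evec Sp_is_mat col_k)
  ultimately show ?thesis
    using that[of k] Kgrp_of_last_column[of k n] by (simp add: colj_def k_def coln_def vscale_apply evec_apply)
qed

lemma iwasawa_decomposition:
  assumes n: "0 < n" and x: "x \<in> Sp n"
  obtains k s m where "k \<in> Kgrp n" "m \<in> Ngrp n" "x = mmul n (mmul n k (expH n s)) m"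
proof -
  define w where "w = mvec n x (nullvec n)"
  define c where "c = (\<lambda>j. inverse (w n) * x n j)"
  obtain k where k: "k \<in> Kgrp n" and k_nullvec: "mvec n k (vscale (nullvec n) (of_real (norm (w n)))) = w"
    and k_evec: "\<And>j. 0 < j \<Longrightarrow> j < n \<Longrightarrow> mvec n k (evec j) = mcol x j - vscale w (c j)"
    unfolding w_def c_def by (rule iwasawa_Kgrp_part[OF n x]) blast
  have kS: "k \<in> Sp n"
    using k by (rule Kgrp_Sp)
  define s where "s = ln (norm (w n))"
  have "w n \<noteq> 0"
    unfolding w_def by (rule Sp_nullvec_image(2)[OF n x])
  then have exp_s: "exp s = norm (w n)"
    by (simp add: s_def)
  define m where "m = mmul n (expH n (- s)) (mmul n (spinv n k) x)"
  have mS: "m \<in> Sp n"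
    unfolding m_def by (intro Sp_mmul expH_Sp spinv_Sp n kS x)
  have cancel: "mvec n (spinv n k) (mvec n k z) = z" if "is_vec n z" for z
    using that by (simp add: mvec_mmul[symmetric] spinv_left[OF kS] mvec_mid)
  define v where "v = vscale (nullvec n) (of_real (norm (w n)))"
  have v: "is_vec n v"
    by (simp add: v_def is_vec_def vscale_apply nullvec_apply)
  have expH_v: "mvec n (expH n (- s)) v = nullvec n"
    using n by (simp add: v_def mvec_vscale mvec_expH_nullvec vscale_apply fun_eq_iff mult.assoc
        exp_minus flip: exp_s of_real_mult)
  have "mvec n m (nullvec n) = mvec n (expH n (- s)) (mvec n (spinv n k) (mvec n k v))"
    using k_nullvec by (simp add: m_def mvec_mmul w_def v_def)
  also have "\<dots> = nullvec n"
    by (simp add: cancel[OF v] expH_v)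
  finally have "mvec n m (nullvec n) = nullvec n" .
  moreover have "mvec n m (evec j) = evec j + vscale (nullvec n) (c j)" if j: "0 < j" "j < n" for j
  proof -
    have "mvec n x (evec j) = mvec n k (evec j + vscale v (c j))"
      using j Sp_is_mat[OF x] k_evec[OF j] k_nullvec
      by (simp add: mvec_evec mvec_add mvec_vscale v_def)
    moreover have "is_vec n (evec j)"
      using j by (simp add: is_vec_def evec_apply)
    ultimately show ?thesis
      using j expH_v by (simp add: m_def mvec_mmul mvec_add mvec_vscale cancel v mvec_expH_evec)
  qed
  ultimately have "m \<in> Ngrp n"
    by (rule Ngrp_of_fixes[OF n mS])
  then show ?thesis
    by (rule that[of k m s, OF k]) (simp add: m_def mmul_expH_cancel[OF n kS Sp_is_mat[OF x]])
qed

lemma iwasawa_Sp: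
  assumes n: "0 < n" and x: "x \<in> Sp n"
  shows "exp (iwasawa n x) = norm (x n 0 + x n n)"
proof -
  obtain k s m where k: "k \<in> Kgrp n" and m: "m \<in> Ngrp n" and x_eq: "x = mmul n (mmul n k (expH n s)) m"
    by (rule iwasawa_decomposition[OF n x])
  then have "iwasawa n x = s"
    by (intro iwasawa_eqI[OF n])
  then show ?thesis
    using corner_KAN[OF n k m, of s] x_eq n by (simp add: norm_mult Kgrp_norm_corner[OF k] mvec_nullvec)
qed

section \<open>The estimate\<close>

lemma le_exp_of_add_inverse_le_two_cosh:
  fixes y T :: real
  assumes y: "0 < y" and T: "0 \<le> T" and le: "y + 1 / y \<le> 2 * cosh T"
  shows "y \<le> exp T"
proof (cases "y \<le> cosh T")
  case True
  moreover have "0 \<le> sinh T"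
    using T by simp
  ultimately show ?thesis
    using cosh_plus_sinh[of T] by linarith
next
  case False
  have "y * y + 1 \<le> 2 * cosh T * y"
    using le y by (simp add: field_simps)
  then have "(y - cosh T)^2 \<le> (sinh T)^2"
    using cosh_square_eq[of T] by (simp add: power2_eq_square algebra_simps)
  then have "y - cosh T \<le> sinh T"
    using T power2_le_imp_le[of "y - cosh T" "sinh T"] by simp
  then show ?thesis
    using cosh_plus_sinh[of T] by simp
qed

lemma cartan_iwasawa_real_bound:
  fixes t T s P Q K :: real
  assumes t: "0 \<le> t" and T: "0 \<le> T" and P: "0 < P"
    and upper: "2 * cosh T \<le> exp t * P + exp (- t) * Q"
    and lower: "exp t * P + exp (- t) / P \<le> 2 * cosh T"
    and s: "exp s = P * exp t" and QP: "Q / P \<le> K"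
  shows "0 \<le> T - s" and "T - s \<le> K * exp (- 2 * t)"
proof -
  define y where "y = P * exp t"
  have y: "0 < y"
    using P by (simp add: y_def)
  have "y + 1 / y \<le> 2 * cosh T"
    using lower by (simp add: y_def exp_minus field_simps)
  then have "exp s \<le> exp T"
    using le_exp_of_add_inverse_le_two_cosh[OF y T] s by (simp add: y_def)
  then show "0 \<le> T - s"
    by simp
  have "exp T \<le> 2 * cosh T"
    using cosh_plus_sinh[of T] sinh_le_cosh_real[of T] by linarith
  then have "exp (T - s) \<le> (y + exp (- t) * Q) / y"
    using upper s y by (simp add: exp_diff y_def divide_right_mono mult.commute)
  also have "\<dots> = 1 + (exp (- t) / exp t) * (Q / P)"
    using P by (simp add: y_def add_divide_distrib)
  also have "exp (- t) / exp t = exp (- 2 * t)"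
    by (simp flip: exp_diff)
  also have "1 + exp (- 2 * t) * (Q / P) \<le> 1 + K * exp (- 2 * t)"
    using mult_left_mono[OF QP exp_ge_zero[of "- 2 * t"]] by (simp add: mult.commute)
  also have "\<dots> \<le> exp (K * exp (- 2 * t))"
    by (rule exp_ge_add_one_self)
  finally show "T - s \<le> K * exp (- 2 * t)"
    by simp
qed

lemma sinh_cosh_combination:
  fixes b d :: quat
  shows "2 * (b * of_real (sinh t) + d * of_real (cosh t))
    = (b + d) * of_real (exp t) + (d - b) * of_real (exp (- t))"
proof -
  have sh: "sinh t = (exp t - exp (- t)) / 2" and ch: "cosh t = (exp t + exp (- t)) / 2"
    by (simp_all add: sinh_def cosh_def)
  show ?thesis
    by (simp add: quat_eq_iff) (simp add: sh ch algebra_simps add_divide_distrib diff_divide_distrib)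
qed

lemma norm_sinh_cosh_combination_upper:
  fixes b d :: quat
  shows "2 * norm (b * of_real (sinh t) + d * of_real (cosh t))
    \<le> exp t * norm (b + d) + exp (- t) * norm (d - b)"
proof -
  have "2 * norm (b * of_real (sinh t) + d * of_real (cosh t))
      = norm (2 * (b * of_real (sinh t) + d * of_real (cosh t)))"
    by (simp only: norm_mult norm_numeral)
  also have "\<dots> = norm ((b + d) * of_real (exp t) + (d - b) * of_real (exp (- t)))"
    by (simp only: sinh_cosh_combination)
  also have "\<dots> \<le> exp t * norm (b + d) + exp (- t) * norm (d - b)"
    using norm_triangle_ineq[of "(b + d) * of_real (exp t)" "(d - b) * of_real (exp (- t))"]
    by (simp add: norm_mult mult.commute)
  finally show ?thesis .
qed

lemma norm_sinh_cosh_combination_lower: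
  fixes b d :: quat
  assumes bd: "1 \<le> (norm d)^2 - (norm b)^2"
  shows "exp t * norm (b + d) + exp (- t) / norm (b + d)
    \<le> 2 * norm (b * of_real (sinh t) + d * of_real (cosh t))"
proof -
  define X where "X = b + d"
  define Y where "Y = d - b"
  define P where "P = norm X"
  define Q where "Q = norm Y"
  have inner: "qre X * qre Y + qi X * qi Y + qj X * qj Y + qk X * qk Y = (norm d)^2 - (norm b)^2"
    by (simp only: norm_quat_squared X_def Y_def) (simp add: power2_eq_square algebra_simps)
  have "((norm d)^2 - (norm b)^2)^2 \<le> (P * Q)^2"
    using cauchy_schwarz_real4[of "qre X" "qre Y" "qi X" "qi Y" "qj X" "qj Y" "qk X" "qk Y"]
    by (simp add: inner P_def Q_def norm_quat_squared power_mult_distrib)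
  then have PQ: "(norm d)^2 - (norm b)^2 \<le> P * Q"
    by (rule power2_le_imp_le) (simp add: P_def Q_def)
  then have P: "0 < P"
    using bd by (smt (verit) P_def Q_def mult_nonneg_nonneg norm_ge_zero mult_eq_0_iff)
  have Q: "1 / P \<le> Q"
    using PQ bd P by (simp add: field_simps)
  have "(exp t * P + exp (- t) / P)^2 = (exp t)^2 * P^2 + (exp (- t))^2 * (1 / P)^2 + 2"
    using P by (simp add: power2_eq_square field_simps exp_minus)
  also have "\<dots> \<le> (exp t)^2 * P^2 + (exp (- t))^2 * Q^2 + 2 * (exp t * exp (- t)) * ((norm d)^2 - (norm b)^2)"
  proof -
    have "(1 / P)^2 \<le> Q^2"
      using Q P by (intro power_mono) simp_all
    then have "(exp (- t))^2 * (1 / P)^2 \<le> (exp (- t))^2 * Q^2"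
      by (rule mult_left_mono) simp
    moreover have "2 \<le> 2 * (exp t * exp (- t)) * ((norm d)^2 - (norm b)^2)"
      using bd by (simp add: exp_minus)
    ultimately show ?thesis
      by linarith
  qed
  also have "\<dots> = (norm (X * of_real (exp t) + Y * of_real (exp (- t))))^2"
    by (simp only: norm_quat_squared P_def Q_def X_def Y_def) (simp add: power2_eq_square algebra_simps)
  finally have "exp t * P + exp (- t) / P \<le> norm (X * of_real (exp t) + Y * of_real (exp (- t)))"
    by (rule power2_le_imp_le) simp
  also have "\<dots> = norm (2 * (b * of_real (sinh t) + d * of_real (cosh t)))"
    by (simp only: X_def Y_def sinh_cosh_combination)
  also have "\<dots> = 2 * norm (b * of_real (sinh t) + d * of_real (cosh t))"
    by (simp only: norm_mult norm_numeral)
  finally show ?thesis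
    by (simp add: P_def X_def)
qed

lemma cartan_iwasawa_quat_bound:
  fixes b d :: quat and t T s B D :: real
  assumes t: "0 \<le> t" and T: "0 \<le> T" and d: "norm d = D" and b: "norm b \<le> B"
    and DB: "D^2 = 1 + B^2"
    and cosh_T: "cosh T = norm (b * of_real (sinh t) + d * of_real (cosh t))"
    and exp_s: "exp s = norm (b + d) * exp t"
  shows "0 \<le> T - s" and "T - s \<le> (D + B) / (D - B) * exp (- 2 * t)"
proof -
  have B0: "0 \<le> B"
    using b norm_ge_zero order_trans by blast
  have "B^2 < D^2"
    using DB by simp
  then have BD: "B < D"
    using d by (auto intro: power_less_imp_less_base)
  have "(norm b)^2 \<le> B^2"
    using b by (simp add: power_mono)
  then have bd: "1 \<le> (norm d)^2 - (norm b)^2"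
    using d DB by simp
  have P: "D - B \<le> norm (b + d)"
    using norm_triangle_ineq2[of d "- b"] d b by (simp add: add.commute)
  have Q: "norm (d - b) \<le> D + B"
    using norm_triangle_ineq4[of d b] d b by simp
  have ratio: "norm (d - b) / norm (b + d) \<le> (D + B) / (D - B)"
    using P Q BD B0 by (intro frac_le) simp_all
  have P_pos: "0 < norm (b + d)"
    using P BD by linarith
  have upper: "2 * cosh T \<le> exp t * norm (b + d) + exp (- t) * norm (d - b)"
    using norm_sinh_cosh_combination_upper[of b t d] by (simp add: cosh_T)
  have lower: "exp t * norm (b + d) + exp (- t) / norm (b + d) \<le> 2 * cosh T"
    using norm_sinh_cosh_combination_lower[OF bd, of t] by (simp add: cosh_T)
  show "0 \<le> T - s" and "T - s \<le> (D + B) / (D - B) * exp (- 2 * t)"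
    by (rule cartan_iwasawa_real_bound[OF t T P_pos upper lower exp_s ratio])+
qed

lemma Kgrp_first_column_norm:
  assumes n: "0 < n" and k: "k \<in> Kgrp n"
  shows "(\<Sum>l<n. (norm (k l 0))^2) = 1"
proof -
  have "hform n (mcol k 0) (mcol k 0) = 1"
    using hform_columns_Sp[OF Kgrp_Sp[OF k], of 0 0] n by (simp add: Jform_def)
  then have "of_real ((\<Sum>l<n. (norm (k l 0))^2) - 0) = (of_real 1 :: quat)"
    using Kgrp_entries[OF k n] by (simp add: hform_self mcol_def)
  then show ?thesis
    by (simp only: of_real_eq_iff)
qed

lemma last_row_spinv_Kgrp_expH:
  fixes g :: qmat and t :: real
  assumes n: "0 < n" and k: "k \<in> Kgrp n"
  defines "x \<equiv> mmul n (mmul n (spinv n g) k) (expH n t)"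
    and "b \<equiv> - (\<Sum>l<n. qcnj (g l n) * k l 0)" and "d \<equiv> qcnj (g n n) * k n n"
  shows "x n n = b * of_real (sinh t) + d * of_real (cosh t)"
    and "x n 0 + x n n = (b + d) * of_real (exp t)"
proof -
  have spinv_row: "spinv n g n l = - (qcnj (g l n) * jdiag n l)" if "l \<le> n" for l
    using that by (simp add: spinv_def mmul_Jform_left mmul_Jform_right madj_def jdiag_def)
  have "mmul n (spinv n g) k n j = (\<Sum>l<n. spinv n g n l * k l j) + spinv n g n n * k n j"
    if "j \<le> n" for j
    using that by (simp add: mmul_def sum_atMost_eq_lessThan_plus[of _ n])
  then have "mmul n (spinv n g) k n 0 = b" and "mmul n (spinv n g) k n n = d"
    using n Kgrp_entries[OF k] by (simp_all add: spinv_row jdiag_def sum_negf b_def d_def)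
  then show "x n n = b * of_real (sinh t) + d * of_real (cosh t)"
    and "x n 0 + x n n = (b + d) * of_real (exp t)"
    using n by (simp_all add: x_def mmul_expH_right algebra_simps flip: cosh_plus_sinh)
qed

lemma norm_last_row_spinv_Kgrp:
  assumes n: "0 < n" and k: "k \<in> Kgrp n"
  shows "norm (qcnj (g n n) * k n n) = norm (g n n)"
    and "norm (- (\<Sum>l<n. qcnj (g l n) * k l 0)) \<le> sqrt (\<Sum>l<n. (norm (g l n))^2)"
proof -
  show "norm (qcnj (g n n) * k n n) = norm (g n n)"
    by (simp add: norm_mult Kgrp_norm_corner[OF k])
  have "norm (- (\<Sum>l<n. qcnj (g l n) * k l 0)) \<le> (\<Sum>l<n. norm (g l n) * norm (k l 0))"
    unfolding norm_minus_cancel by (rule order_trans[OF norm_sum]) (simp add: norm_mult)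
  also have "\<dots> \<le> sqrt (\<Sum>l<n. (norm (g l n))^2)"
    using Kgrp_first_column_norm[OF n k] by (intro sum_mult_le_sqrt_sum_power2) simp_all
  finally show "norm (- (\<Sum>l<n. qcnj (g l n) * k l 0)) \<le> sqrt (\<Sum>l<n. (norm (g l n))^2)" .
qed

lemma vnorm_act_origin:
  assumes "g \<in> Sp n"
  shows "vnorm n (act n g (\<lambda>_. 0)) = sqrt (\<Sum>l<n. (norm (g l n))^2) / norm (g n n)"
proof -
  have "vnorm n (act n g (\<lambda>_. 0)) = sqrt ((\<Sum>l<n. (norm (g l n))^2) / (norm (g n n))^2)"
    unfolding vnorm_def act_def qnorm_eq_norm
    by (simp add: norm_mult norm_inverse power_mult_distrib power_inverse sum_divide_distrib divide_inverse
        sum_distrib_right)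
  then show ?thesis
    using Sp_corner_nonzero[OF assms] by (simp add: real_sqrt_divide)
qed

theorem mainTheorem14:
  fixes n :: nat and g k :: qmat and t :: real
  assumes "1 \<le> n"
    and "g \<in> Sp n" and "k \<in> Kgrp n" and "0 \<le> t"
  shows "let x = mmul n (mmul n (minv n g) k) (expH n t);
             r = vnorm n (act n g (\<lambda>_. 0))
         in 0 \<le> cartan n x - iwasawa n x \<and>
            cartan n x - iwasawa n x \<le> (1 + r) / (1 - r) * exp (- 2 * t)"
proof -
  have n: "0 < n" and g: "g \<in> Sp n" and k: "k \<in> Kgrp n" and t: "0 \<le> t"
    using assms by simp_all
  define x where "x = mmul n (mmul n (spinv n g) k) (expH n t)"
  define B where "B = sqrt (\<Sum>l<n. (norm (g l n))^2)"
  define D where "D = norm (g n n)"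
  have x: "x \<in> Sp n"
    unfolding x_def by (intro Sp_mmul spinv_Sp expH_Sp Kgrp_Sp g k n)
  have DB: "D^2 = 1 + B^2"
    using Sp_last_column_norm[OF g] by (simp add: D_def B_def sum_nonneg)
  have D: "0 < D"
    using Sp_corner_nonzero[OF g] by (simp add: D_def)
  have r: "vnorm n (act n g (\<lambda>_. 0)) = B / D"
    using vnorm_act_origin[OF g] by (simp add: B_def D_def)
  have ratio: "(1 + B / D) / (1 - B / D) = ((D + B) / D) / ((D - B) / D)"
    using D by (simp add: field_simps)
  define b where "b = - (\<Sum>l<n. qcnj (g l n) * k l 0)"
  define d where "d = qcnj (g n n) * k n n"
  note last_row = last_row_spinv_Kgrp_expH[OF n k, of g t, folded x_def b_def d_def]
  note norms = norm_last_row_spinv_Kgrp[OF n k, of g, folded b_def d_def B_def D_def]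
  have "cosh (cartan n x) = norm (b * of_real (sinh t) + d * of_real (cosh t))"
    using cartan_Sp(2)[OF n x] last_row(1) by simp
  moreover have "exp (iwasawa n x) = norm (b + d) * exp t"
    using iwasawa_Sp[OF n x] last_row(2) by (simp add: norm_mult)
  ultimately have "0 \<le> cartan n x - iwasawa n x"
    and "cartan n x - iwasawa n x \<le> (D + B) / (D - B) * exp (- 2 * t)"
    by (rule cartan_iwasawa_quat_bound[OF t cartan_Sp(1)[OF n x] norms DB])+
  then show ?thesis
    unfolding Let_def minv_eq_spinv[OF g] x_def[symmetric] r ratio using D by simp
qed

end
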